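(* Let $g,\psi$ be nonconstant entire functions and $0<p<\infty$. Then (i) $M_{(g,\psi)}\in L^\infty(\mathbb{C},dA)$ if and only if $B_{(|g|^p,\psi)}\in L^\infty(\mathbb{C},dA)$; (ii) $\widetilde M_{(g,\psi)}\in L^\infty(\mathbb{C},dA)$ if and only if $\widetilde B_{(|g|^p,\psi)}\in L^\infty(\mathbb{C},dA)$.
   Context: $dA$ is Lebesgue area measure on $\mathbb{C}$; $k_w(z)=e^{\overline wz-\frac12|w|^2}$. $M_{(g,\psi)}(z)=\frac{|g'(z)|}{1+|z|}e^{\frac12(|\psi(z)|^2-|z|^2)}$, $\widetilde M_{(g,\psi)}(z)=\frac{|g(z)|(1+|\psi(z)|)}{1+|z|}e^{\frac12(|\psi(z)|^2-|z|^2)}$, $B_{(|g|^p,\psi)}(w)=\int_{\mathbb{C}}|k_w(\psi(z))|^p\frac{|g'(z)|^pe^{-\frac p2|z|^2}}{(1+|z|)^p}\,dA(z)$, $\widetilde B_{(|g|^p,\psi)}(w)=\int_{\mathbb{C}}|k_w(\psi(z))|^p\frac{(1+|w|)^p|g(z)|^pe^{-\frac p2|z|^2}}{(1+|z|)^p}\,dA(z)$. *)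

theory Defs
  imports "HOL-Analysis.Analysis"
begin

text \<open>Normalized reproducing kernel of the Fock space: k_w(z) = exp(conj(w) z - |w|^2/2).\<close>
definition kw :: "complex \<Rightarrow> complex \<Rightarrow> complex" where
  "kw w z = exp (cnj w * z - of_real (cmod w ^ 2 / 2))"

definition M_fun :: "(complex \<Rightarrow> complex) \<Rightarrow> (complex \<Rightarrow> complex) \<Rightarrow> complex \<Rightarrow> real" where
  "M_fun g \<psi> z = cmod (deriv g z) / (1 + cmod z) * exp ((cmod (\<psi> z) ^ 2 - cmod z ^ 2) / 2)"

definition Mt_fun :: "(complex \<Rightarrow> complex) \<Rightarrow> (complex \<Rightarrow> complex) \<Rightarrow> complex \<Rightarrow> real" where
  "Mt_fun g \<psi> z = cmod (g z) * (1 + cmod (\<psi> z)) / (1 + cmod z) * exp ((cmod (\<psi> z) ^ 2 - cmod z ^ 2) / 2)"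

text \<open>The Berezin-type transforms; integrals of nonnegative functions, hence ennreal-valued.\<close>
definition B_fun :: "real \<Rightarrow> (complex \<Rightarrow> complex) \<Rightarrow> (complex \<Rightarrow> complex) \<Rightarrow> complex \<Rightarrow> ennreal" where
  "B_fun p g \<psi> w = (\<integral>\<^sup>+ z. ennreal (cmod (kw w (\<psi> z)) powr p * cmod (deriv g z) powr p
      * exp (- (p / 2) * cmod z ^ 2) / (1 + cmod z) powr p) \<partial>lebesgue)"

definition Bt_fun :: "real \<Rightarrow> (complex \<Rightarrow> complex) \<Rightarrow> (complex \<Rightarrow> complex) \<Rightarrow> complex \<Rightarrow> ennreal" where
  "Bt_fun p g \<psi> w = (\<integral>\<^sup>+ z. ennreal (cmod (kw w (\<psi> z)) powr p * (1 + cmod w) powr p * cmod (g z) powr p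
      * exp (- (p / 2) * cmod z ^ 2) / (1 + cmod z) powr p) \<partial>lebesgue)"

definition Linf_real :: "(complex \<Rightarrow> real) \<Rightarrow> bool" where
  "Linf_real f \<longleftrightarrow> f \<in> borel_measurable lebesgue \<and> (\<exists>C::real. AE z in lebesgue. \<bar>f z\<bar> \<le> C)"

definition Linf_ennreal :: "(complex \<Rightarrow> ennreal) \<Rightarrow> bool" where
  "Linf_ennreal f \<longleftrightarrow> f \<in> borel_measurable lebesgue \<and> (\<exists>C::real. AE z in lebesgue. f z \<le> ennreal C)"

end

theory Submission
  imports Defs "HOL-Complex_Analysis.Complex_Analysis" "HOL-Probability.Distributions"
    "HOL-Real_Asymp.Real_Asymp"
begin

abbreviation turn :: "real \<Rightarrow> complex" where
  "turn t \<equiv> exp (2 * of_real pi * \<i> * of_real t)"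

lemma norm_turn [simp]: "cmod (turn t) = 1"
  by (simp add: norm_exp_eq_Re)

lemma cnj_turn_mult_turn: "cnj (turn t) * turn t = 1"
  using complex_norm_square[of "turn t"] by (simp add: mult.commute)

lemma holomorphic_circle_mean:
  fixes r :: real
  assumes "f holomorphic_on ball z R" and "0 < r" "r < R"
  shows "((\<lambda>t. f (z + r * turn t)) has_integral f z) {0..1}"
proof -
  have "cball z r \<subseteq> ball z R"
    using assms by auto
  then have "continuous_on (cball z r) f" "f holomorphic_on ball z r"
    using assms(1) ball_subset_cball
    by (metis holomorphic_on_imp_continuous_on holomorphic_on_subset)+
  then have "((\<lambda>w. f w / (w - z)) has_contour_integral 2 * of_real pi * \<i> * f z) (circlepath z r)"
    using \<open>0 < r\<close> by (intro Cauchy_integral_circlepath) auto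
  then have "((\<lambda>t. 2 * of_real pi * \<i> * f (z + r * turn t)) has_integral 2 * of_real pi * \<i> * f z) {0..1}"
    unfolding has_contour_integral_def
  proof (rule has_integral_eq[rotated])
    fix t :: real
    assume "t \<in> {0..1}"
    then have "vector_derivative (circlepath z r) (at t within {0..1}) = 2 * pi * \<i> * r * turn t"
      by (intro vector_derivative_circlepath01) auto
    then show "f (circlepath z r t) / (circlepath z r t - z)
        * vector_derivative (circlepath z r) (at t within {0..1}) = 2 * of_real pi * \<i> * f (z + r * turn t)"
      using \<open>0 < r\<close> by (simp add: circlepath field_simps)
  qed
  from has_integral_mult_right[OF this, of "inverse (2 * pi * \<i>)"] show ?thesis
    by (simp add: field_simps)
qed

lemma ln_norm_circle_mean_nonvanishing:
  fixes r :: real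
  assumes "u holomorphic_on ball z R" and "0 < r" "r < R"
    and "\<And>w. w \<in> ball z R \<Longrightarrow> u w \<noteq> 0"
  shows "((\<lambda>t. ln (cmod (u (z + r * turn t)))) has_integral ln (cmod (u z))) {0..1}"
proof -
  obtain L where "L holomorphic_on ball z R" and uL: "\<And>w. w \<in> ball z R \<Longrightarrow> u w = exp (L w)"
    using contractible_imp_holomorphic_log[OF assms(1) _ assms(4)]
    by (metis centre_in_ball convex_imp_contractible convex_ball)
  from holomorphic_circle_mean[OF this(1) assms(2,3)]
  have "((\<lambda>t. Re (L (z + r * turn t))) has_integral Re (L z)) {0..1}"
    using has_integral_linear[OF _ bounded_linear_Re] by (auto simp: o_def)
  moreover have "z + r * turn t \<in> ball z R" for t
    using assms(2,3) by (simp add: dist_norm norm_mult)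
  ultimately show ?thesis
    using assms(2,3) by (simp add: uL norm_exp_eq_Re)
qed

lemma finite_zeros_cball:
  assumes "u holomorphic_on UNIV" "u z \<noteq> 0"
  shows "finite {w \<in> cball c r. u w = 0}"
proof (cases "u constant_on UNIV")
  case True
  with assms show ?thesis by (auto simp: constant_on_def)
next
  case False
  show ?thesis
    by (rule holomorphic_compact_finite_zeros[OF assms(1) open_UNIV connected_UNIV compact_cball _ False]) simp
qed

lemma entire_factor_zero:
  assumes "u holomorphic_on UNIV" "u a = 0" "u z \<noteq> 0"
  obtains m v where "0 < m" "v holomorphic_on UNIV" "v a \<noteq> 0" "\<And>w. u w = (w - a) ^ m * v w"
proof -
  have "\<not> u constant_on UNIV"
    using assms(2,3) by (metis constant_on_def UNIV_I)
  then obtain g r m where m: "0 < m" and "0 < r" and holg: "g holomorphic_on ball a r"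
    and ug: "\<And>w. w \<in> ball a r \<Longrightarrow> u w = (w - a) ^ m * g w"
    and gnz: "\<And>w. w \<in> ball a r \<Longrightarrow> g w \<noteq> 0"
    using holomorphic_factor_zero_nonconstant[OF assms(1) open_UNIV connected_UNIV UNIV_I assms(2)]
    by metis
  define v where "v w = (if w = a then g a else u w / (w - a) ^ m)" for w
  have "v holomorphic_on (UNIV - {a})"
    by (rule holomorphic_transform[of "\<lambda>w. u w / (w - a) ^ m"])
       (auto intro!: holomorphic_intros holomorphic_on_subset[OF assms(1)] simp: v_def)
  moreover have "v holomorphic_on ball a r"
    by (rule holomorphic_transform[OF holg]) (use ug in \<open>auto simp: v_def\<close>)
  moreover have "UNIV = (UNIV - {a}) \<union> ball a r"
    using \<open>0 < r\<close> by auto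
  ultimately have "v holomorphic_on UNIV"
    by (metis holomorphic_on_Un open_ball open_delete open_UNIV)
  moreover have "u w = (w - a) ^ m * v w" for w
    using m assms(2) by (cases "w = a") (auto simp: v_def)
  ultimately show ?thesis
    using that m gnz \<open>0 < r\<close> by (auto simp: v_def)
qed

lemma blaschke_numerator_nonzero:
  assumes "cmod (a - z) < r" "w \<in> cball z r"
  shows "of_real (r ^ 2) - cnj (a - z) * (w - z) \<noteq> 0"
proof
  assume "of_real (r ^ 2) - cnj (a - z) * (w - z) = 0"
  then have "cmod (of_real (r ^ 2)) = cmod (cnj (a - z) * (w - z))"
    by simp
  then have "r ^ 2 = cmod (a - z) * cmod (w - z)"
    by (simp add: norm_mult norm_power del: complex_cnj_diff)
  also have "\<dots> \<le> cmod (a - z) * r"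
    using assms(2) by (intro mult_left_mono) (auto simp: dist_norm norm_minus_commute)
  also have "\<dots> < r ^ 2"
    using assms(1) le_less_trans[OF norm_ge_zero assms(1)]
    by (simp add: power2_eq_square mult_strict_right_mono)
  finally show False by simp
qed

lemma norm_blaschke_numerator_on_circle:
  assumes "0 \<le> r"
  shows "cmod (of_real (r ^ 2) - cnj (a - z) * (r * turn t)) = r * cmod (z + r * turn t - a)"
proof -
  have "of_real (r ^ 2) - cnj (a - z) * (r * turn t) = cnj (r * turn t - (a - z)) * (r * turn t)"
  proof -
    have "cnj (r * turn t - (a - z)) * (r * turn t)
        = of_real r * of_real r * (cnj (turn t) * turn t) - cnj (a - z) * (r * turn t)"
      by (simp add: algebra_simps)
    then show ?thesis
      by (simp add: cnj_turn_mult_turn power2_eq_square)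
  qed
  also have "cmod \<dots> = cmod (z + r * turn t - a) * r"
    using assms by (simp only: norm_mult complex_mod_cnj norm_turn) (simp add: algebra_simps)
  finally show ?thesis by simp
qed


lemma remove_zero_inside_circle:
  fixes r :: real
  assumes holu: "u holomorphic_on UNIV" and "u z \<noteq> 0" "u a = 0" and a: "a \<in> ball z r"
  obtains u' k where "u' holomorphic_on UNIV" "u' z \<noteq> 0" "0 < k"
    "{w \<in> cball z r. u' w = 0} = {w \<in> cball z r. u w = 0} - {a}"
    "\<And>t. cmod (u' (z + r * turn t)) = k * cmod (u (z + r * turn t))"
    "k * cmod (u z) \<le> cmod (u' z)"
proof -
  obtain m v where holv: "v holomorphic_on UNIV" and va: "v a \<noteq> 0"
    and uv: "\<And>w. u w = (w - a) ^ m * v w"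
    using entire_factor_zero[OF holu \<open>u a = 0\<close> \<open>u z \<noteq> 0\<close>] by metis
  define B where "B w = of_real (r ^ 2) - cnj (a - z) * (w - z)" for w
  define u' where "u' w = v w * B w ^ m" for w
  have na: "cmod (a - z) < r"
    using a by (simp add: dist_norm norm_minus_commute)
  then have r: "0 < r"
    by (meson le_less_trans norm_ge_zero)
  have Bnz: "B w \<noteq> 0" if "w \<in> cball z r" for w
    unfolding B_def using na that by (rule blaschke_numerator_nonzero)
  have "u' holomorphic_on UNIV"
    unfolding u'_def B_def by (intro holomorphic_intros holv)
  moreover have nu'z: "cmod (u' z) = r ^ m * r ^ m * cmod (v z)"
    using r by (simp add: u'_def B_def norm_mult norm_power power_mult_distrib mult_2 power_add flip: power_mult)
  then have "u' z \<noteq> 0"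
    using \<open>u z \<noteq> 0\<close> r uv[of z] by auto
  moreover have "{w \<in> cball z r. u' w = 0} = {w \<in> cball z r. u w = 0} - {a}"
    using Bnz va by (auto simp: u'_def uv)
  moreover have "cmod (u' (z + r * turn t)) = r ^ m * cmod (u (z + r * turn t))" for t
    using norm_blaschke_numerator_on_circle[of r a z t] r
    by (simp add: u'_def B_def uv norm_mult norm_power power_mult_distrib)
  moreover have "r ^ m * cmod (u z) \<le> cmod (u' z)"
  proof -
    have "cmod (u z) = cmod (z - a) ^ m * cmod (v z)"
      by (simp add: uv norm_mult norm_power)
    also have "\<dots> \<le> r ^ m * cmod (v z)"
      using na by (intro mult_right_mono power_mono) (auto simp: norm_minus_commute)
    finally show ?thesis
      using r by (simp add: nu'z mult_left_mono mult.assoc)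
  qed
  ultimately show ?thesis
    using that[of u' "r ^ m"] r by auto
qed

lemma ln_norm_circle_mean_zero_free_cball:
  fixes r :: real
  assumes holu: "u holomorphic_on UNIV" and "0 < r" and nz: "\<And>w. w \<in> cball z r \<Longrightarrow> u w \<noteq> 0"
  shows "((\<lambda>t. ln (cmod (u (z + r * turn t)))) has_integral ln (cmod (u z))) {0..1}"
proof (rule ln_norm_circle_mean_nonvanishing)
  define Z where "Z = {w \<in> cball z (r + 1). u w = 0}"
  have "finite Z"
    unfolding Z_def using holu nz[of z] \<open>0 < r\<close> by (intro finite_zeros_cball) auto
  define R where "R = Min (insert (r + 1) (dist z ` Z))"
  have "r < dist z w" if "w \<in> Z" for w
    using that nz[of w] by (force simp: Z_def)
  then show "r < R"
    unfolding R_def using \<open>finite Z\<close> by auto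
  show "u w \<noteq> 0" if "w \<in> ball z R" for w
  proof
    assume "u w = 0"
    moreover have "dist z w < r + 1"
      using that \<open>finite Z\<close> by (simp add: R_def)
    ultimately have "R \<le> dist z w"
      unfolding R_def using \<open>finite Z\<close> by (simp add: Z_def)
    then show False
      using that by simp
  qed
qed (use holu \<open>0 < r\<close> in \<open>auto intro: holomorphic_on_subset\<close>)

lemma ln_norm_le_circle_mean:
  fixes r :: real
  assumes "u holomorphic_on UNIV" "u z \<noteq> 0" "0 < r" "\<And>w. w \<in> sphere z r \<Longrightarrow> u w \<noteq> 0"
  shows "(\<lambda>t. ln (cmod (u (z + r * turn t)))) integrable_on {0..1}"
    and "ln (cmod (u z)) \<le> integral {0..1} (\<lambda>t. ln (cmod (u (z + r * turn t))))"
proof -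
  let ?mean = "\<lambda>u. integral {0..1} (\<lambda>t. ln (cmod (u (z + r * turn t))))"
  have "(\<lambda>t. ln (cmod (u (z + r * turn t)))) integrable_on {0..1} \<and> ln (cmod (u z)) \<le> ?mean u"
    if "u holomorphic_on UNIV" "u z \<noteq> 0" "\<And>w. w \<in> sphere z r \<Longrightarrow> u w \<noteq> 0"
      "card {w \<in> cball z r. u w = 0} = n" for u n
    using that
  proof (induction n arbitrary: u)
    case 0
    then have "u w \<noteq> 0" if "w \<in> cball z r" for w
      using that finite_zeros_cball[of u z z r] by auto
    with ln_norm_circle_mean_zero_free_cball[OF "0.prems"(1) \<open>0 < r\<close>] show ?case
      by (simp add: has_integral_iff)
  next
    case (Suc n)
    then have "{w \<in> cball z r. u w = 0} \<noteq> {}"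
      by (metis card.empty nat.distinct(1))
    then obtain a where a: "a \<in> cball z r" "u a = 0"
      by blast
    then have "a \<in> ball z r"
      using Suc.prems(3)[of a] by fastforce
    obtain u' k where holu': "u' holomorphic_on UNIV" and "u' z \<noteq> 0" "0 < k"
      and zeros: "{w \<in> cball z r. u' w = 0} = {w \<in> cball z r. u w = 0} - {a}"
      and circle: "\<And>t. cmod (u' (z + r * turn t)) = k * cmod (u (z + r * turn t))"
      and centre: "k * cmod (u z) \<le> cmod (u' z)"
      using remove_zero_inside_circle[OF Suc.prems(1,2) a(2) \<open>a \<in> ball z r\<close>] by blast
    have "card {w \<in> cball z r. u' w = 0} = n"
      unfolding zeros using Suc.prems(4) a finite_zeros_cball[OF Suc.prems(1,2)] by simp
    moreover have "u' w \<noteq> 0" if "w \<in> sphere z r" for w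
      using zeros that Suc.prems(3)[OF that] by auto
    ultimately have IH: "(\<lambda>t. ln (cmod (u' (z + r * turn t)))) integrable_on {0..1}"
      "ln (cmod (u' z)) \<le> ?mean u'"
      using Suc.IH[OF holu' \<open>u' z \<noteq> 0\<close>] by auto
    have "ln (cmod (u (z + r * turn t))) = ln (cmod (u' (z + r * turn t))) - ln k" for t
    proof -
      have "u (z + r * turn t) \<noteq> 0"
        using Suc.prems(3) \<open>0 < r\<close> by (simp add: dist_norm norm_mult)
      then show ?thesis
        using \<open>0 < k\<close> by (simp add: circle ln_mult)
    qed
    then have "(\<lambda>t. ln (cmod (u (z + r * turn t)))) integrable_on {0..1}"
      and "?mean u = ?mean u' - ln k"
      using IH(1) by (simp_all add: integral_diff integrable_diff integrable_const_ivl)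
    moreover have "ln k + ln (cmod (u z)) = ln (k * cmod (u z))"
      using \<open>0 < k\<close> Suc.prems(2) by (simp add: ln_mult)
    moreover have "\<dots> \<le> ln (cmod (u' z))"
      using centre \<open>0 < k\<close> Suc.prems(2) \<open>u' z \<noteq> 0\<close> by simp
    ultimately show ?case
      using IH(2) by linarith
  qed
  then show "(\<lambda>t. ln (cmod (u (z + r * turn t)))) integrable_on {0..1}"
    and "ln (cmod (u z)) \<le> ?mean u"
    using assms by blast+
qed


lemma continuous_on_circle_comp:
  assumes "continuous_on UNIV f"
  shows "continuous_on S (\<lambda>t. f (z + r * turn t))"
  by (rule continuous_on_compose2[OF assms]) (auto intro!: continuous_intros)

lemma norm_powr_le_circle_mean:
  fixes r p :: real
  assumes holh: "h holomorphic_on UNIV" and "0 < p" "0 < r"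
    and nz: "\<And>w. w \<in> sphere z r \<Longrightarrow> h w \<noteq> 0"
  shows "cmod (h z) powr p \<le> integral {0..1} (\<lambda>t. cmod (h (z + r * turn t)) powr p)"
proof -
  let ?F = "\<lambda>t. cmod (h (z + r * turn t)) powr p"
  have intF: "?F integrable_on {0..1}"
    using \<open>0 < p\<close> holomorphic_on_imp_continuous_on[OF holh]
    by (intro integrable_continuous_interval continuous_on_powr' continuous_intros
        continuous_on_circle_comp) auto
  show ?thesis
  proof (cases "h z = 0")
    case True
    then show ?thesis
      using \<open>0 < p\<close> intF by (simp add: integral_nonneg)
  next
    case False
    let ?y = "\<lambda>t. ln (cmod (h (z + r * turn t)))"
    define m where "m = integral {0..1} ?y"
    have inty: "?y integrable_on {0..1}" and "ln (cmod (h z)) \<le> m"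
      using ln_norm_le_circle_mean[OF holh False \<open>0 < r\<close> nz] by (auto simp: m_def)
    have const: "((\<lambda>t::real. c) has_integral c) {0..1}" for c :: real
      using has_integral_const_real[of c 0 1] by simp
    have "((\<lambda>t. exp (p * m) * (1 + p * (?y t - m))) has_integral exp (p * m) * (1 + p * (m - m))) {0..1}"
      using inty unfolding m_def
      by (intro has_integral_mult_right has_integral_add has_integral_diff const) auto
    then have "exp (p * m) \<le> integral {0..1} ?F"
      unfolding diff_self mult_zero_right add_0_right mult_1_right
    proof (rule has_integral_le[OF _ integrable_integral[OF intF]])
      fix t :: real
      have "exp (p * m) * (1 + p * (?y t - m)) \<le> exp (p * m) * exp (p * (?y t - m))"
        by (intro mult_left_mono exp_ge_add_one_self) auto
      also have "\<dots> = ?F t"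
        using nz[of "z + r * turn t"] \<open>0 < r\<close>
        by (simp add: powr_def dist_norm norm_mult mult.commute flip: exp_add) (simp add: algebra_simps)
      finally show "exp (p * m) * (1 + p * (?y t - m)) \<le> ?F t" .
    qed
    moreover have "cmod (h z) powr p \<le> exp (p * m)"
      using \<open>ln (cmod (h z)) \<le> m\<close> False \<open>0 < p\<close> by (simp add: powr_def)
    ultimately show ?thesis
      by linarith
  qed
qed


lemma exists_zero_free_circle:
  assumes "u holomorphic_on UNIV" "u z \<noteq> 0"
  obtains r where "R \<le> r" "0 < r" "\<And>w. w \<in> sphere z r \<Longrightarrow> u w \<noteq> 0"
proof -
  define R' where "R' = max R 1"
  define Z where "Z = {w \<in> cball z (R' + 1). u w = 0}"
  have "finite (dist z ` Z)"
    unfolding Z_def using finite_zeros_cball[OF assms] by simp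
  then have "infinite ({R'..R' + 1} - dist z ` Z)"
    by (simp add: Diff_infinite_finite)
  then obtain r where r: "r \<in> {R'..R' + 1} - dist z ` Z"
    using infinite_imp_nonempty by blast
  have "u w \<noteq> 0" if "w \<in> sphere z r" for w
    using r that by (auto simp: Z_def)
  moreover have "R \<le> r" "0 < r"
    using r by (auto simp: R'_def)
  ultimately show ?thesis
    using that by blast
qed

lemma taylor_coeff_le_circle_mean:
  fixes r :: real
  assumes holf: "f holomorphic_on UNIV" and "0 < r"
  shows "cmod ((deriv ^^ k) f z / fact k) \<le> integral {0..1} (\<lambda>t. cmod (f (z + r * turn t))) / r ^ k"
proof -
  let ?g = "\<lambda>t. 2 * of_real pi * \<i> * (f (z + r * turn t) / (r * turn t) ^ k)"
  have "continuous_on (cball z r) f" "f holomorphic_on ball z r"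
    using holf by (auto intro: holomorphic_on_imp_continuous_on holomorphic_on_subset)
  then have "((\<lambda>w. f w / (w - z) ^ Suc k) has_contour_integral (2 * pi * \<i>) / fact k * (deriv ^^ k) f z)
      (circlepath z r)"
    using \<open>0 < r\<close> by (intro Cauchy_has_contour_integral_higher_derivative_circlepath) auto
  then have int: "(?g has_integral (2 * pi * \<i>) / fact k * (deriv ^^ k) f z) {0..1}"
    unfolding has_contour_integral_def
  proof (rule has_integral_eq[rotated])
    fix t :: real
    assume "t \<in> {0..1}"
    then have "vector_derivative (circlepath z r) (at t within {0..1}) = 2 * pi * \<i> * r * turn t"
      by (intro vector_derivative_circlepath01) auto
    then show "f (circlepath z r t) / (circlepath z r t - z) ^ Suc k
        * vector_derivative (circlepath z r) (at t within {0..1}) = ?g t"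
      using \<open>0 < r\<close> by (simp add: circlepath field_simps)
  qed
  have "2 * pi * cmod ((deriv ^^ k) f z / fact k) = cmod (integral {0..1} ?g)"
    using integral_unique[OF int] by (simp add: norm_mult norm_divide)
  also have "\<dots> \<le> integral {0..1} (\<lambda>t. 2 * pi * (cmod (f (z + r * turn t)) / r ^ k))"
    using int holomorphic_on_imp_continuous_on[OF holf] \<open>0 < r\<close>
    by (intro integral_norm_bound_integral integrable_continuous_interval continuous_intros
        continuous_on_circle_comp)
       (auto simp: norm_mult norm_divide norm_power)
  also have "\<dots> = 2 * pi * (integral {0..1} (\<lambda>t. cmod (f (z + r * turn t))) / r ^ k)"
    by (simp add: integral_mult_right integral_divide)
  finally show ?thesis
    by (subst (asm) mult_le_cancel_left_pos) auto
qed

lemma circle_mean_sq_le: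
  fixes r C :: real
  assumes holu: "u holomorphic_on UNIV" and "u z \<noteq> 0" and contf: "continuous_on UNIV f"
    and "0 < C" and bound: "\<And>w. cmod (u w) * exp ((cmod (f w) ^ 2 - cmod w ^ 2) / 2) \<le> C * (1 + cmod w)"
    and "0 < r" and nz: "\<And>w. w \<in> sphere z r \<Longrightarrow> u w \<noteq> 0"
  shows "integral {0..1} (\<lambda>t. cmod (f (z + r * turn t)) ^ 2)
    \<le> 2 * (ln C + (r + cmod z) + (r + cmod z) ^ 2 / 2 - ln (cmod (u z)))"
proof -
  define L where "L = ln C + (r + cmod z) + (r + cmod z) ^ 2 / 2"
  let ?w = "\<lambda>t. z + r * turn t"
  have pointwise: "ln (cmod (u (?w t))) \<le> L - cmod (f (?w t)) ^ 2 / 2" for t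
  proof -
    have "u (?w t) \<noteq> 0"
      using nz \<open>0 < r\<close> by (simp add: dist_norm norm_mult)
    have "cmod (?w t) \<le> r + cmod z"
      using norm_triangle_ineq[of z "r * turn t"] \<open>0 < r\<close> by (simp add: norm_mult)
    then have "ln (1 + cmod (?w t)) + cmod (?w t) ^ 2 / 2 \<le> (r + cmod z) + (r + cmod z) ^ 2 / 2"
      using ln_add_one_self_le_self[of "cmod (?w t)"] power_mono[of "cmod (?w t)" "r + cmod z" 2]
      by simp
    moreover have "ln (cmod (u (?w t))) + (cmod (f (?w t)) ^ 2 - cmod (?w t) ^ 2) / 2
        \<le> ln C + ln (1 + cmod (?w t))"
      using bound[of "?w t"] \<open>0 < C\<close> \<open>u (?w t) \<noteq> 0\<close> add_pos_nonneg[of 1 "cmod (?w t)"]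
      by (subst (asm) ln_le_cancel_iff[symmetric]) (auto simp: ln_mult)
    then have "ln (cmod (u (?w t))) + cmod (f (?w t)) ^ 2 / 2 - cmod (?w t) ^ 2 / 2
        \<le> ln C + ln (1 + cmod (?w t))"
      by (simp add: diff_divide_distrib)
    ultimately show ?thesis
      unfolding L_def by linarith
  qed
  have intf: "(\<lambda>t. cmod (f (?w t)) ^ 2) integrable_on {0..1}"
    by (intro integrable_continuous_interval continuous_intros continuous_on_circle_comp contf)
  have "ln (cmod (u z)) \<le> integral {0..1} (\<lambda>t. ln (cmod (u (?w t))))"
    using ln_norm_le_circle_mean[OF holu \<open>u z \<noteq> 0\<close> \<open>0 < r\<close> nz] by blast
  also have "\<dots> \<le> integral {0..1} (\<lambda>t. L - cmod (f (?w t)) ^ 2 / 2)"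
    using ln_norm_le_circle_mean[OF holu \<open>u z \<noteq> 0\<close> \<open>0 < r\<close> nz] intf pointwise
    by (intro integral_le integrable_diff integrable_on_divide integrable_const_ivl) auto
  also have "\<dots> = L - integral {0..1} (\<lambda>t. cmod (f (?w t)) ^ 2) / 2"
    using intf by (simp add: integral_diff integrable_const_ivl integrable_on_divide)
  finally show ?thesis
    unfolding L_def by (simp add: field_simps)
qed


lemma integral_le_of_integral_power2_le:
  fixes g :: "real \<Rightarrow> real" and r :: real
  assumes cont: "continuous_on {0..1} g" and "0 < r" and "integral {0..1} (\<lambda>t. g t ^ 2) \<le> B"
  shows "integral {0..1} g \<le> B / (2 * r) + r / 2"
proof -
  have int: "(\<lambda>t. g t ^ q) integrable_on {0..1}" for q
    by (intro integrable_continuous_interval continuous_intros cont)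
  have "integral {0..1} g \<le> integral {0..1} (\<lambda>t. g t ^ 2 / (2 * r) + r / 2)"
    using int[of 1] int[of 2] \<open>0 < r\<close> sum_squares_bound
    by (intro integral_le integrable_add integrable_on_divide integrable_const_ivl)
       (auto simp: field_simps power2_eq_square)
  also have "\<dots> = integral {0..1} (\<lambda>t. g t ^ 2) / (2 * r) + r / 2"
    using int[of 2] by (simp add: integral_add integral_divide integrable_on_divide integrable_const_ivl)
  also have "\<dots> \<le> B / (2 * r) + r / 2"
    using assms(3) \<open>0 < r\<close> by (simp add: divide_right_mono)
  finally show ?thesis .
qed

lemma le_limit_of_unbounded_le:
  fixes f :: "real \<Rightarrow> real"
  assumes "(f \<longlongrightarrow> L) at_top" and "\<And>R. \<exists>r\<ge>R. c \<le> f r"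
  shows "c \<le> L"
proof (rule ccontr)
  assume "\<not> c \<le> L"
  then have "eventually (\<lambda>r. f r < c) at_top"
    using assms(1) by (intro order_tendstoD(2)) auto
  then obtain R where "\<And>r. r \<ge> R \<Longrightarrow> f r < c"
    by (auto simp: eventually_at_top_linorder)
  with assms(2)[of R] show False
    by force
qed

lemma entire_affine_of_higher_derivs_zero:
  assumes holf: "f holomorphic_on UNIV" and "\<And>k. 2 \<le> k \<Longrightarrow> (deriv ^^ k) f z = 0"
  shows "f w = f z + deriv f z * (w - z)"
proof -
  have "(\<lambda>n. (deriv ^^ n) f z / fact n * (w - z) ^ n) sums f w"
    by (rule holomorphic_power_series[of f z "cmod (w - z) + 1" w])
       (auto intro: holomorphic_on_subset[OF holf] simp: dist_norm norm_minus_commute)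
  moreover have "(\<lambda>n. (deriv ^^ n) f z / fact n * (w - z) ^ n) sums
      (\<Sum>n\<in>{0, 1}. (deriv ^^ n) f z / fact n * (w - z) ^ n)"
    using assms(2) by (intro sums_finite) (auto simp: not_less_eq_eq numeral_2_eq_2)
  ultimately show ?thesis
    by (simp add: sums_unique2)
qed


lemma affine_of_weighted_growth:
  fixes C :: real
  assumes holu: "u holomorphic_on UNIV" and "u z \<noteq> 0" and holf: "f holomorphic_on UNIV"
    and "0 < C" and bound: "\<And>w. cmod (u w) * exp ((cmod (f w) ^ 2 - cmod w ^ 2) / 2) \<le> C * (1 + cmod w)"
  obtains a b where "\<And>w. f w = a * w + b" "cmod a \<le> 1"
proof -
  define G where
    "G r = 2 * (ln C + (r + cmod z) + (r + cmod z) ^ 2 / 2 - ln (cmod (u z))) / (2 * r) + r / 2" for r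
  have contf: "continuous_on UNIV f"
    using holf holomorphic_on_imp_continuous_on by blast
  have coeff: "\<exists>r\<ge>R. cmod ((deriv ^^ k) f z / fact k) \<le> G r / r ^ min k 2" if "1 \<le> k" for k R
  proof -
    obtain r where "max R 1 \<le> r" "0 < r" and nz: "\<And>w. w \<in> sphere z r \<Longrightarrow> u w \<noteq> 0"
      using exists_zero_free_circle[OF holu \<open>u z \<noteq> 0\<close>] by metis
    let ?I = "integral {0..1} (\<lambda>t. cmod (f (z + r * turn t)))"
    have cont: "continuous_on {0..1} (\<lambda>t. cmod (f (z + r * turn t)))"
      by (intro continuous_intros continuous_on_circle_comp contf)
    have "?I \<le> G r"
      unfolding G_def using circle_mean_sq_le[OF holu \<open>u z \<noteq> 0\<close> contf \<open>0 < C\<close> bound \<open>0 < r\<close> nz]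
      by (intro integral_le_of_integral_power2_le cont \<open>0 < r\<close>)
    moreover have "0 \<le> ?I"
      by (intro integral_nonneg integrable_continuous_interval cont) auto
    moreover have "r ^ min k 2 \<le> r ^ k"
      using \<open>max R 1 \<le> r\<close> by (intro power_increasing) auto
    ultimately have "?I / r ^ k \<le> G r / r ^ min k 2"
      using \<open>0 < r\<close> by (intro frac_le) auto
    then show ?thesis
      using taylor_coeff_le_circle_mean[OF holf \<open>0 < r\<close>, of k z] \<open>max R 1 \<le> r\<close> by auto
  qed
  have "cmod ((deriv ^^ k) f z / fact k) \<le> 0" if "2 \<le> k" for k
  proof (rule le_limit_of_unbounded_le)
    show "((\<lambda>r. G r / r ^ min k 2) \<longlongrightarrow> 0) at_top"
      using that unfolding G_def by (simp add: min_absorb2) real_asymp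
  qed (use coeff[of k] that in \<open>auto simp: min_absorb2\<close>)
  then have higher_zero: "(deriv ^^ k) f z = 0" if "2 \<le> k" for k
    using that by simp
  have affine: "f w = deriv f z * w + (f z - deriv f z * z)" for w
    using entire_affine_of_higher_derivs_zero[OF holf higher_zero, of w] by (simp add: algebra_simps)
  have "cmod ((deriv ^^ 1) f z / fact 1) \<le> 1"
  proof (rule le_limit_of_unbounded_le)
    show "((\<lambda>r. G r / r ^ min 1 2) \<longlongrightarrow> 1) at_top"
      unfolding G_def by simp real_asymp
  qed (use coeff[of 1] in simp)
  then have "cmod (deriv f z) \<le> 1"
    by simp
  with affine show ?thesis
    using that by blast
qed


lemma borel_measurable_pair_lborel:
  "f \<in> borel_measurable (borel :: ('a::euclidean_space \<times> 'b::euclidean_space) measure) \<Longrightarrow>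
   f \<in> borel_measurable (lborel \<Otimes>\<^sub>M lborel :: ('a \<times> 'b) measure)"
  by (metis lborel_prod measurable_lborel1 measurable_lborel2)

lemma borel_measurable_continuous_comp:
  fixes f :: "'b::topological_space \<Rightarrow> ennreal" and g :: "'a::topological_space \<Rightarrow> 'b"
  assumes "f \<in> borel_measurable borel" "continuous_on UNIV g"
  shows "(\<lambda>x. f (g x)) \<in> borel_measurable borel"
  using measurable_compose[OF borel_measurable_continuous_onI[OF assms(2)] assms(1)] by (simp add: o_def)

lemma borel_measurable_Complex_pair [measurable]:
  "(\<lambda>p. Complex (fst p) (snd p)) \<in> borel_measurable borel"
  by (intro borel_measurable_continuous_onI) (simp add: Complex_eq continuous_intros)

lemma distr_lborel_pair_Complex:
  "distr (lborel :: (real \<times> real) measure) borel ((\<lambda>p. Complex (fst p) (snd p))) = lborel"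
proof (rule lborel_eqI[symmetric])
  fix l u :: complex
  assume le: "\<And>b. b \<in> Basis \<Longrightarrow> l \<bullet> b \<le> u \<bullet> b"
  have "Re l \<le> Re u" "Im l \<le> Im u"
    using le[of 1] le[of \<i>] by auto
  have "emeasure (distr lborel borel ((\<lambda>p. Complex (fst p) (snd p)))) (box l u)
      = emeasure (lborel :: (real \<times> real) measure) ((\<lambda>p. Complex (fst p) (snd p)) -` box l u)"
    by (subst emeasure_distr) auto
  also have "(\<lambda>p. Complex (fst p) (snd p)) -` box l u = {Re l<..<Re u} \<times> {Im l<..<Im u}"
    by (auto simp: box_def Basis_complex_def)
  also have "emeasure lborel \<dots> = emeasure lborel {Re l<..<Re u} * emeasure lborel {Im l<..<Im u}"
    unfolding lborel_prod[symmetric] by (rule lborel.emeasure_pair_measure_Times) auto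
  also have "\<dots> = (\<Prod>b\<in>Basis. (u - l) \<bullet> b)"
    using \<open>Re l \<le> Re u\<close> \<open>Im l \<le> Im u\<close> by (simp add: Basis_complex_def ennreal_mult)
  finally show "emeasure (distr lborel borel ((\<lambda>p. Complex (fst p) (snd p)))) (box l u) = (\<Prod>b\<in>Basis. (u - l) \<bullet> b)" .
qed simp

lemma nn_integral_lborel_complex:
  fixes f :: "complex \<Rightarrow> ennreal"
  assumes [measurable]: "f \<in> borel_measurable borel"
  shows "(\<integral>\<^sup>+z. f z \<partial>lborel) = (\<integral>\<^sup>+x. (\<integral>\<^sup>+y. f (Complex x y) \<partial>lborel) \<partial>lborel)"
    and "(\<integral>\<^sup>+z. f z \<partial>lborel) = (\<integral>\<^sup>+y. (\<integral>\<^sup>+x. f (Complex x y) \<partial>lborel) \<partial>lborel)"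
proof -
  have m: "(\<lambda>(x, y). f (Complex x y)) \<in> borel_measurable (lborel \<Otimes>\<^sub>M lborel)"
    by (intro borel_measurable_pair_lborel) measurable
  have "(\<integral>\<^sup>+z. f z \<partial>lborel) = (\<integral>\<^sup>+z. f z \<partial>distr (lborel :: (real \<times> real) measure) borel ((\<lambda>p. Complex (fst p) (snd p))))"
    by (simp add: distr_lborel_pair_Complex)
  also have "\<dots> = (\<integral>\<^sup>+(x, y). f (Complex x y) \<partial>(lborel \<Otimes>\<^sub>M lborel))"
    by (simp add: nn_integral_distr lborel_prod case_prod_beta')
  finally have eq: "(\<integral>\<^sup>+z. f z \<partial>lborel) = (\<integral>\<^sup>+(x, y). f (Complex x y) \<partial>(lborel \<Otimes>\<^sub>M lborel))" .
  show "(\<integral>\<^sup>+z. f z \<partial>lborel) = (\<integral>\<^sup>+x. (\<integral>\<^sup>+y. f (Complex x y) \<partial>lborel) \<partial>lborel)"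
    unfolding eq lborel.nn_integral_fst[OF m, symmetric] by simp
  show "(\<integral>\<^sup>+z. f z \<partial>lborel) = (\<integral>\<^sup>+y. (\<integral>\<^sup>+x. f (Complex x y) \<partial>lborel) \<partial>lborel)"
    unfolding eq lborel_pair.nn_integral_snd[OF m, symmetric] by simp
qed

definition shear_Re :: "real \<Rightarrow> complex \<Rightarrow> complex" where
  "shear_Re t z = z + of_real (t * Im z)"

definition shear_Im :: "real \<Rightarrow> complex \<Rightarrow> complex" where
  "shear_Im t z = z + \<i> * of_real (t * Re z)"

lemma continuous_on_shear [continuous_intros]:
  "continuous_on S g \<Longrightarrow> continuous_on S (\<lambda>z. shear_Re t (g z))"
  "continuous_on S g \<Longrightarrow> continuous_on S (\<lambda>z. shear_Im t (g z))"
  unfolding shear_Re_def shear_Im_def by (intro continuous_intros; assumption)+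

lemma shear_Re_Complex [simp]: "shear_Re t (Complex x y) = Complex (x + t * y) y"
  by (simp add: shear_Re_def complex_eq_iff)

lemma shear_Im_Complex [simp]: "shear_Im t (Complex x y) = Complex x (y + t * x)"
  by (simp add: shear_Im_def complex_eq_iff)

lemma nn_integral_lborel_shear_Re:
  fixes f :: "complex \<Rightarrow> ennreal"
  assumes mf: "f \<in> borel_measurable borel"
  shows "(\<integral>\<^sup>+z. f (shear_Re t z) \<partial>lborel) = (\<integral>\<^sup>+z. f z \<partial>lborel)"
proof -
  have "(\<lambda>x. f (Complex x y)) \<in> borel_measurable borel" for y
    by (rule borel_measurable_continuous_comp[OF mf]) (simp add: Complex_eq continuous_intros)
  then have "(\<integral>\<^sup>+x. f (Complex (x + t * y) y) \<partial>lborel) = (\<integral>\<^sup>+x. f (Complex x y) \<partial>lborel)" for y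
    using nn_integral_real_affine[of "\<lambda>x. f (Complex x y)" 1 "t * y"] by (simp add: add.commute)
  moreover have "(\<lambda>z. f (shear_Re t z)) \<in> borel_measurable borel"
    by (rule borel_measurable_continuous_comp[OF mf]) (intro continuous_intros)
  ultimately show ?thesis
    by (simp add: nn_integral_lborel_complex(2) mf)
qed

lemma nn_integral_lborel_shear_Im:
  fixes f :: "complex \<Rightarrow> ennreal"
  assumes mf: "f \<in> borel_measurable borel"
  shows "(\<integral>\<^sup>+z. f (shear_Im t z) \<partial>lborel) = (\<integral>\<^sup>+z. f z \<partial>lborel)"
proof -
  have "(\<lambda>y. f (Complex x y)) \<in> borel_measurable borel" for x
    by (rule borel_measurable_continuous_comp[OF mf]) (simp add: Complex_eq continuous_intros)
  then have "(\<integral>\<^sup>+y. f (Complex x (y + t * x)) \<partial>lborel) = (\<integral>\<^sup>+y. f (Complex x y) \<partial>lborel)" for x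
    using nn_integral_real_affine[of "\<lambda>y. f (Complex x y)" 1 "t * x"] by (simp add: add.commute)
  moreover have "(\<lambda>z. f (shear_Im t z)) \<in> borel_measurable borel"
    by (rule borel_measurable_continuous_comp[OF mf]) (intro continuous_intros)
  ultimately show ?thesis
    by (simp add: nn_integral_lborel_complex(1) mf)
qed

text \<open>Paeth's decomposition of a rotation into three shears.\<close>

lemma mult_unit_eq_shears:
  assumes "cmod c = 1" "Re c \<noteq> -1"
  shows "c * z = shear_Re (- Im c / (1 + Re c)) (shear_Im (Im c) (shear_Re (- Im c / (1 + Re c)) z))"
proof -
  define \<tau> where "\<tau> = Im c / (1 + Re c)"
  have "1 + Re c \<noteq> 0"
    using assms(2) by linarith
  have "(Re c)\<^sup>2 + (Im c)\<^sup>2 = 1"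
    using assms(1) by (simp add: cmod_def)
  then have a: "1 - \<tau> * Im c = Re c"
    using \<open>1 + Re c \<noteq> 0\<close> by (simp add: \<tau>_def power2_eq_square field_simps)
  then have "2 - \<tau> * Im c = 1 + Re c"
    by simp
  then have b: "\<tau> * (2 - \<tau> * Im c) = Im c"
    using \<open>1 + Re c \<noteq> 0\<close> by (simp only:) (simp add: \<tau>_def)
  show ?thesis
    unfolding minus_divide_left[symmetric] \<tau>_def[symmetric]
  proof (rule complex_eqI)
    have "Re (shear_Re (- \<tau>) (shear_Im (Im c) (shear_Re (- \<tau>) z)))
        = Re z * (1 - \<tau> * Im c) - Im z * (\<tau> * (2 - \<tau> * Im c))"
      by (simp add: shear_Re_def shear_Im_def algebra_simps)
    then show "Re (c * z) = Re (shear_Re (- \<tau>) (shear_Im (Im c) (shear_Re (- \<tau>) z)))"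
      by (simp only: a b) simp
    have "Im (shear_Re (- \<tau>) (shear_Im (Im c) (shear_Re (- \<tau>) z))) = Im c * Re z + (1 - \<tau> * Im c) * Im z"
      by (simp add: shear_Re_def shear_Im_def algebra_simps)
    then show "Im (c * z) = Im (shear_Re (- \<tau>) (shear_Im (Im c) (shear_Re (- \<tau>) z)))"
      by (simp only: a) (simp add: mult.commute)
  qed
qed

lemma nn_integral_lborel_mult_unit:
  fixes f :: "complex \<Rightarrow> ennreal"
  assumes mf: "f \<in> borel_measurable borel" and "cmod c = 1"
  shows "(\<integral>\<^sup>+z. f (c * z) \<partial>lborel) = (\<integral>\<^sup>+z. f z \<partial>lborel)"
proof -
  have shears: "(\<integral>\<^sup>+z. f (c * z) \<partial>lborel) = (\<integral>\<^sup>+z. f z \<partial>lborel)"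
    if mf: "f \<in> borel_measurable borel" and "cmod c = 1" "Re c \<noteq> -1" for f c
  proof -
    define \<tau> where "\<tau> = - Im c / (1 + Re c)"
    have [measurable]: "(\<lambda>z. f (shear_Re \<tau> z)) \<in> borel_measurable borel"
      "(\<lambda>z. f (shear_Re \<tau> (shear_Im (Im c) z))) \<in> borel_measurable borel"
      by (auto intro!: borel_measurable_continuous_comp[OF mf] continuous_intros)
    have "(\<integral>\<^sup>+z. f (c * z) \<partial>lborel) = (\<integral>\<^sup>+z. f (shear_Re \<tau> (shear_Im (Im c) (shear_Re \<tau> z))) \<partial>lborel)"
      unfolding \<tau>_def using mult_unit_eq_shears[OF that(2,3)] by simp
    also have "\<dots> = (\<integral>\<^sup>+z. f (shear_Re \<tau> (shear_Im (Im c) z)) \<partial>lborel)"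
      by (rule nn_integral_lborel_shear_Re) simp
    also have "\<dots> = (\<integral>\<^sup>+z. f (shear_Re \<tau> z) \<partial>lborel)"
      by (rule nn_integral_lborel_shear_Im) simp
    also have "\<dots> = (\<integral>\<^sup>+z. f z \<partial>lborel)"
      by (rule nn_integral_lborel_shear_Re[OF mf])
    finally show ?thesis .
  qed
  show ?thesis
  proof (cases "Re c = -1")
    case True
    then have "c = \<i> * \<i>"
      using \<open>cmod c = 1\<close> by (simp add: complex_eq_iff cmod_def)
    moreover have "(\<lambda>z. f (\<i> * z)) \<in> borel_measurable borel"
      by (rule borel_measurable_continuous_comp[OF mf]) (intro continuous_intros)
    ultimately show ?thesis
      using shears[of "\<lambda>z. f (\<i> * z)" \<i>] shears[OF mf, of \<i>] by (simp add: mult.assoc)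
  qed (use shears[OF mf \<open>cmod c = 1\<close>] in simp)
qed

lemma nn_integral_ball_eq_rotation_average:
  fixes f :: "complex \<Rightarrow> ennreal"
  assumes [measurable]: "f \<in> borel_measurable borel"
  shows "(\<integral>\<^sup>+z. indicator (ball c r) z * f z \<partial>lborel)
    = (\<integral>\<^sup>+z. indicator (ball 0 r) z * (\<integral>\<^sup>+t. indicator {0..1} t * f (c + turn t * z) \<partial>lborel) \<partial>lborel)"
    (is "_ = (\<integral>\<^sup>+z. _ * ?A z \<partial>lborel)")
proof -
  have [measurable]: "ball (0::complex) r \<in> sets borel"
    by simp
  have [measurable]: "(\<lambda>q::real \<times> complex. indicator {0..1} (fst q) :: ennreal) \<in> borel_measurable borel"
    by (rule borel_measurable_continuous_comp[where g = fst]) (simp_all add: continuous_on_fst)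
  have [measurable]: "(\<lambda>q::real \<times> complex. indicator (ball 0 r) (snd q) :: ennreal) \<in> borel_measurable borel"
    by (rule borel_measurable_continuous_comp[where g = snd]) (measurable, simp add: continuous_on_snd)
  have [measurable]: "(\<lambda>q::real \<times> complex. f (c + turn (fst q) * snd q)) \<in> borel_measurable borel"
    by (rule borel_measurable_continuous_comp[OF assms]) (intro continuous_intros)
  have meas: "(\<lambda>(t, z). indicator {0..1::real} t * (indicator (ball 0 r) z * f (c + turn t * z)))
      \<in> borel_measurable (lborel \<Otimes>\<^sub>M lborel)"
    by (rule borel_measurable_pair_lborel) measurable
  define Q where "Q = (\<integral>\<^sup>+z. indicator (ball 0 r) z * f (c + z) \<partial>lborel)"
  have [measurable]: "(\<lambda>z. f (c + z)) \<in> borel_measurable borel"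
    by (rule borel_measurable_continuous_comp) (auto intro: continuous_intros)
  have mF: "(\<lambda>z. indicator (ball 0 r) z * f (c + z)) \<in> borel_measurable borel"
    by measurable
  have "(\<integral>\<^sup>+z. indicator (ball c r) z * f z \<partial>lborel)
      = (\<integral>\<^sup>+z. indicator (ball c r) z * f z \<partial>distr lborel borel ((+) c))"
    by (simp add: lborel_distr_plus)
  also have "\<dots> = Q"
    unfolding Q_def by (subst nn_integral_distr) (auto simp: indicator_def dist_norm intro!: nn_integral_cong)
  also have "Q = (\<integral>\<^sup>+t. indicator {0..1::real} t * Q \<partial>lborel)"
    using nn_integral_cmult_indicator[of "{0..1::real}" lborel Q] by (simp add: mult.commute)
  also have "\<dots> = (\<integral>\<^sup>+t. (\<integral>\<^sup>+z. indicator {0..1} t * (indicator (ball 0 r) z * f (c + turn t * z)) \<partial>lborel) \<partial>lborel)"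
  proof (rule nn_integral_cong)
    fix t :: real
    have "Q = (\<integral>\<^sup>+z. indicator (ball 0 r) (turn t * z) * f (c + turn t * z) \<partial>lborel)"
      unfolding Q_def by (rule nn_integral_lborel_mult_unit[symmetric, OF mF]) simp
    also have "\<dots> = (\<integral>\<^sup>+z. indicator (ball 0 r) z * f (c + turn t * z) \<partial>lborel)"
      by (simp add: indicator_def norm_mult)
    finally show "indicator {0..1} t * Q
        = (\<integral>\<^sup>+z. indicator {0..1} t * (indicator (ball 0 r) z * f (c + turn t * z)) \<partial>lborel)"
      by (simp add: nn_integral_cmult)
  qed
  also have "\<dots> = (\<integral>\<^sup>+z. (\<integral>\<^sup>+t. indicator {0..1} t * (indicator (ball 0 r) z * f (c + turn t * z)) \<partial>lborel) \<partial>lborel)"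
    by (rule lborel_pair.Fubini'[OF meas, symmetric])
  also have "\<dots> = (\<integral>\<^sup>+z. indicator (ball 0 r) z * ?A z \<partial>lborel)"
  proof (rule nn_integral_cong)
    fix z :: complex
    have [measurable]: "(\<lambda>t. f (c + turn t * z)) \<in> borel_measurable borel"
      by (rule borel_measurable_continuous_comp[OF assms]) (intro continuous_intros)
    show "(\<integral>\<^sup>+t. indicator {0..1} t * (indicator (ball 0 r) z * f (c + turn t * z)) \<partial>lborel)
        = indicator (ball 0 r) z * ?A z"
      by (simp add: nn_integral_cmult[symmetric] mult.left_commute)
  qed
  finally show ?thesis .
qed

lemma norm_powr_le_rotated_circle_mean:
  fixes p :: real
  assumes holh: "h holomorphic_on UNIV" and "0 < p" "z \<noteq> 0"
    and nz: "\<And>w. w \<in> sphere c (cmod z) \<Longrightarrow> h w \<noteq> 0"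
  shows "cmod (h c) powr p \<le> integral {0..1} (\<lambda>t. cmod (h (c + turn t * z)) powr p)"
proof -
  define s where "s = z / cmod z"
  have "cmod s = 1" "s * cmod z = z"
    using \<open>z \<noteq> 0\<close> by (simp_all add: s_def norm_divide)
  define h' where "h' w = h (c + s * (w - c))" for w
  have "h' holomorphic_on UNIV"
    unfolding h'_def by (intro holomorphic_on_compose_gen[OF _ holh, unfolded o_def] holomorphic_intros) auto
  moreover have "h' w \<noteq> 0" if "w \<in> sphere c (cmod z)" for w
    using that nz[of "c + s * (w - c)"] \<open>cmod s = 1\<close>
    by (simp add: h'_def dist_norm norm_mult norm_minus_commute)
  ultimately have "cmod (h' c) powr p \<le> integral {0..1} (\<lambda>t. cmod (h' (c + cmod z * turn t)) powr p)"
    using \<open>0 < p\<close> \<open>z \<noteq> 0\<close> by (intro norm_powr_le_circle_mean) auto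
  moreover have "h' (c + cmod z * turn t) = h (c + turn t * z)" for t
  proof -
    have "s * (cmod z * turn t) = turn t * z"
      using \<open>s * cmod z = z\<close> by (metis mult.assoc mult.commute)
    then show ?thesis
      by (simp only: h'_def add_diff_cancel_left')
  qed
  ultimately show ?thesis
    by (simp add: h'_def)
qed

lemma null_sets_lborel_sphere: "sphere (c::complex) r \<in> null_sets lborel"
  using negligible_sphere[of c r]
  by (auto simp: null_sets_completion_iff negligible_iff_null_sets negligible_convex_frontier)

lemma AE_zero_free_circle:
  assumes "h holomorphic_on UNIV" "h c \<noteq> 0"
  shows "AE z in lborel. z \<in> ball 0 r \<longrightarrow> z \<noteq> 0 \<and> (\<forall>w\<in>sphere c (cmod z). h w \<noteq> 0)"
proof -
  define D where "D = dist c ` {w \<in> cball c r. h w = 0}"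
  have "finite D"
    unfolding D_def using finite_zeros_cball[OF assms] by simp
  moreover have sphere: "AE z in lborel. z \<notin> sphere (0::complex) d" for d :: real
    by (rule AE_not_in[OF null_sets_lborel_sphere])
  ultimately have "AE z in lborel. z \<notin> sphere (0::complex) 0 \<and> (\<forall>d\<in>D. z \<notin> sphere 0 d)"
    by (intro AE_conjI eventually_ball_finite ballI sphere)
  then show ?thesis
  proof eventually_elim
    case (elim z)
    then show ?case
      by (force simp: D_def)
  qed
qed

lemma norm_powr_le_disc_integral:
  fixes p r :: real
  assumes holh: "h holomorphic_on UNIV" and "0 < p" "0 \<le> r"
  shows "ennreal (pi * r ^ 2 * cmod (h c) powr p)
    \<le> (\<integral>\<^sup>+z. indicator (ball c r) z * ennreal (cmod (h z) powr p) \<partial>lborel)"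
proof (cases "h c = 0")
  case False
  let ?f = "\<lambda>z. ennreal (cmod (h z) powr p)"
  have cont: "continuous_on UNIV (\<lambda>z. cmod (h z) powr p)"
    using \<open>0 < p\<close> holomorphic_on_imp_continuous_on[OF holh]
    by (intro continuous_on_powr' continuous_intros) auto
  have pointwise: "ennreal (cmod (h c) powr p) * indicator (ball (0::complex) r) z
      \<le> indicator (ball 0 r) z * (\<integral>\<^sup>+t. indicator {0..1} t * ?f (c + turn t * z) \<partial>lborel)"
    if "z \<in> ball 0 r \<longrightarrow> z \<noteq> 0 \<and> (\<forall>w\<in>sphere c (cmod z). h w \<noteq> 0)" for z
  proof (cases "z \<in> ball 0 r")
    case True
    have "((\<lambda>t. cmod (h (c + turn t * z)) powr p) has_integral
        integral {0..1} (\<lambda>t. cmod (h (c + turn t * z)) powr p)) {0..1}"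
      using cont by (intro integrable_integral integrable_continuous_interval continuous_on_compose2[OF cont])
        (auto intro!: continuous_intros)
    then have "(\<integral>\<^sup>+t. indicator {0..1} t * ?f (c + turn t * z) \<partial>lborel)
        = ennreal (integral {0..1} (\<lambda>t. cmod (h (c + turn t * z)) powr p))"
      by (subst mult.commute) (rule nn_integral_has_integral_lebesgue'; simp)
    moreover have "cmod (h c) powr p \<le> integral {0..1} (\<lambda>t. cmod (h (c + turn t * z)) powr p)"
      using True that \<open>0 < p\<close> by (intro norm_powr_le_rotated_circle_mean[OF holh]) auto
    ultimately show ?thesis
      using True by (simp add: ennreal_leI)
  qed simp
  have "ennreal (pi * r ^ 2 * cmod (h c) powr p) = ennreal (cmod (h c) powr p) * emeasure lborel (ball (0::complex) r)"
    using \<open>0 \<le> r\<close> by (simp add: emeasure_ball unit_ball_vol_2 ennreal_mult'[symmetric] mult_ac)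
  also have "\<dots> = (\<integral>\<^sup>+z. ennreal (cmod (h c) powr p) * indicator (ball (0::complex) r) z \<partial>lborel)"
    by (rule nn_integral_cmult_indicator[symmetric]) simp
  also have "\<dots> \<le> (\<integral>\<^sup>+z. indicator (ball 0 r) z * (\<integral>\<^sup>+t. indicator {0..1} t * ?f (c + turn t * z) \<partial>lborel) \<partial>lborel)"
    using AE_zero_free_circle[OF holh False, of r] by (intro nn_integral_mono_AE) (auto elim!: AE_mp intro: pointwise)
  also have "\<dots> = (\<integral>\<^sup>+z. indicator (ball c r) z * ?f z \<partial>lborel)"
    using cont by (intro nn_integral_ball_eq_rotation_average[symmetric] measurable_compose[OF _ measurable_ennreal]
        borel_measurable_continuous_onI)
  finally show ?thesis .
qed simp

lemma nn_integral_gaussian_real: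
  fixes s :: real assumes s: "0 < s"
  shows "(\<integral>\<^sup>+x. ennreal (exp (- s * x^2)) \<partial>lborel) = ennreal (sqrt (pi / s))"
proof -
  define \<sigma> where "\<sigma> = sqrt (1 / (2 * s))"
  have s2: "\<sigma>^2 = 1 / (2 * s)" using s by (simp add: \<sigma>_def)
  have k: "sqrt (2 * pi * \<sigma>^2) = sqrt (pi / s)" using s by (simp add: s2)
  have eq: "exp (- s * x^2) = sqrt (pi / s) * normal_density 0 \<sigma> x" for x
  proof -
    have "sqrt (pi / s) * normal_density 0 \<sigma> x = sqrt (pi / s) / sqrt (pi / s) * exp (- (x^2) / (2 * (\<sigma>^2)))"
      unfolding normal_density_def k[symmetric] by simp
    also have "\<dots> = exp (- s * x^2)" using s by (simp add: s2)
    finally show ?thesis by simp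
  qed
  have "(\<integral>\<^sup>+x. ennreal (exp (- s * x^2)) \<partial>lborel) = (\<integral>\<^sup>+x. ennreal (sqrt (pi / s)) * ennreal (normal_density 0 \<sigma> x) \<partial>lborel)"
  proof (intro nn_integral_cong)
    fix x :: real
    have "ennreal (sqrt (pi / s) * normal_density 0 \<sigma> x) = ennreal (sqrt (pi / s)) * ennreal (normal_density 0 \<sigma> x)"
      by (rule ennreal_mult) (use s in auto)
    thus "ennreal (exp (- s * x^2)) = ennreal (sqrt (pi / s)) * ennreal (normal_density 0 \<sigma> x)"
      by (simp only: eq[of x])
  qed
  also have "\<dots> = ennreal (sqrt (pi / s)) * (\<integral>\<^sup>+x. ennreal (normal_density 0 \<sigma> x) \<partial>lborel)"
    by (rule nn_integral_cmult) simp
  also have "(\<integral>\<^sup>+x. ennreal (normal_density 0 \<sigma> x) \<partial>lborel) = 1"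
  proof -
    have sp: "0 < \<sigma>" using s by (simp add: \<sigma>_def)
    show ?thesis by (subst nn_integral_eq_integral) (auto simp: integrable_normal_density[OF sp] integral_normal_density[OF sp])
  qed
  finally show ?thesis by simp
qed

lemma nn_integral_gaussian_complex:
  fixes s :: real assumes s: "0 < s"
  shows "(\<integral>\<^sup>+z. ennreal (exp (- s * cmod (z - c)^2)) \<partial>lborel) = ennreal (pi / s)"
proof -
  have m: "(\<lambda>z::complex. ennreal (exp (- s * cmod z^2))) \<in> borel_measurable borel" by measurable
  have m2: "(\<lambda>z::complex. ennreal (exp (- s * cmod (z - c)^2))) \<in> borel_measurable borel" by measurable
  have "(\<integral>\<^sup>+z. ennreal (exp (- s * cmod (z - c)^2)) \<partial>lborel) =
        (\<integral>\<^sup>+z. ennreal (exp (- s * cmod (z - c)^2)) \<partial>(distr lborel borel ((+) c)))"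
    by (simp add: lborel_distr_plus)
  also have "\<dots> = (\<integral>\<^sup>+z. ennreal (exp (- s * cmod z^2)) \<partial>lborel)"
    by (subst nn_integral_distr) (auto simp: m2)
  also have "\<dots> = (\<integral>\<^sup>+x. (\<integral>\<^sup>+y. ennreal (exp (- s * x^2)) * ennreal (exp (- s * y^2)) \<partial>lborel) \<partial>lborel)"
    by (subst nn_integral_lborel_complex(1)[OF m])
       (intro nn_integral_cong, simp add: cmod_power2 ennreal_mult[symmetric] exp_add[symmetric] algebra_simps)
  also have "\<dots> = (\<integral>\<^sup>+x. ennreal (exp (- s * x^2)) * ennreal (sqrt (pi / s)) \<partial>lborel)"
    by (intro nn_integral_cong) (simp add: nn_integral_cmult nn_integral_gaussian_real[OF s, simplified])
  also have "\<dots> = ennreal (sqrt (pi / s)) * ennreal (sqrt (pi / s))"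
    by (simp add: nn_integral_multc nn_integral_gaussian_real[OF s, simplified])
  also have "\<dots> = ennreal (pi / s)"
    using s by (simp add: ennreal_mult[symmetric])
  finally show ?thesis .
qed

lemma AE_lebesgue_ex_in_open:
  fixes S :: "'a::euclidean_space set"
  assumes ae: "AE x in lebesgue. P x" and S: "open S" "S \<noteq> {}"
  shows "\<exists>x\<in>S. P x"
proof (rule ccontr)
  assume "\<not> (\<exists>x\<in>S. P x)"
  from ae obtain N where N: "{x \<in> space lebesgue. \<not> P x} \<subseteq> N" "emeasure lebesgue N = 0" "N \<in> sets lebesgue"
    by (rule AE_E)
  have "S \<subseteq> N" using N(1) \<open>\<not> (\<exists>x\<in>S. P x)\<close> by auto
  moreover have "negligible N" using N by (simp add: negligible_iff_null_sets null_sets_def)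
  ultimately have "negligible S" by (rule negligible_subset[rotated])
  thus False using open_not_negligible[OF S] by simp
qed

lemma continuous_AE_le_imp_le:
  fixes f :: "'a::euclidean_space \<Rightarrow> real"
  assumes cf: "continuous_on UNIV f" and ae: "AE x in lebesgue. f x \<le> C"
  shows "f x \<le> C"
proof (rule ccontr)
  assume "\<not> f x \<le> C"
  have "open {x. C < f x}" using cf by (intro open_Collect_less continuous_intros) auto
  moreover have "x \<in> {x. C < f x}" using \<open>\<not> f x \<le> C\<close> by simp
  hence "{x. C < f x} \<noteq> {}" by blast
  ultimately obtain y where "y \<in> {x. C < f x}" "f y \<le> C" using AE_lebesgue_ex_in_open[OF ae] by blast
  thus False by simp
qed

lemma borel_measurable_nn_integral_continuous:
  fixes F :: "complex \<Rightarrow> complex \<Rightarrow> real"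
  assumes "continuous_on UNIV (case_prod F)"
  shows "(\<lambda>w. \<integral>\<^sup>+z. ennreal (F w z) \<partial>lebesgue) \<in> borel_measurable lebesgue"
proof -
  have "case_prod F \<in> borel_measurable borel"
    using assms by (rule borel_measurable_continuous_onI)
  then have "(\<lambda>(w, z). ennreal (F w z)) \<in> borel_measurable (lborel \<Otimes>\<^sub>M lborel)"
    by (intro borel_measurable_pair_lborel) (simp add: case_prod_beta')
  then have "(\<lambda>w. \<integral>\<^sup>+z. ennreal (F w z) \<partial>lborel) \<in> borel_measurable lebesgue"
    by (intro measurable_completion lborel.borel_measurable_nn_integral) (simp add: case_prod_beta')
  then show ?thesis
    by (simp add: nn_integral_completion)
qed


lemma one_plus_norm_pos [simp]: "0 < 1 + norm x"
  by (simp add: add_pos_nonneg)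

lemma one_plus_norm_nonzero [simp]: "1 + norm x \<noteq> 0"
  using one_plus_norm_pos[of x] by linarith

definition weighted_growth :: "(complex \<Rightarrow> complex) \<Rightarrow> (complex \<Rightarrow> complex) \<Rightarrow> complex \<Rightarrow> real" where
  "weighted_growth u \<psi> z = cmod (u z) / (1 + cmod z) * exp ((cmod (\<psi> z) ^ 2 - cmod z ^ 2) / 2)"

definition berezin_transform ::
    "real \<Rightarrow> (complex \<Rightarrow> complex) \<Rightarrow> (complex \<Rightarrow> complex) \<Rightarrow> complex \<Rightarrow> ennreal" where
  "berezin_transform p u \<psi> w = (\<integral>\<^sup>+ z. ennreal (cmod (kw w (\<psi> z)) powr p * cmod (u z) powr p
      * exp (- (p / 2) * cmod z ^ 2) / (1 + cmod z) powr p) \<partial>lebesgue)"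

lemma M_fun_eq_weighted_growth: "M_fun g \<psi> = weighted_growth (deriv g) \<psi>"
  by (simp add: fun_eq_iff M_fun_def weighted_growth_def)

lemma Mt_fun_eq_weighted_growth: "Mt_fun g \<psi> z = (1 + cmod (\<psi> z)) * weighted_growth g \<psi> z"
  by (simp add: Mt_fun_def weighted_growth_def)

lemma B_fun_eq_berezin_transform: "B_fun p g \<psi> = berezin_transform p (deriv g) \<psi>"
  by (simp add: fun_eq_iff B_fun_def berezin_transform_def)

lemma weighted_growth_nonneg: "0 \<le> weighted_growth u \<psi> z"
  by (simp add: weighted_growth_def)

lemma continuous_on_weighted_growth:
  assumes "continuous_on UNIV u" "continuous_on UNIV \<psi>"
  shows "continuous_on UNIV (weighted_growth u \<psi>)"
  unfolding weighted_growth_def[abs_def] by (intro continuous_intros assms) auto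

lemma norm_kw: "cmod (kw w v) = exp ((cmod v ^ 2 - cmod (v - w) ^ 2) / 2)"
proof -
  have "cmod (kw w v) = exp (Re (cnj w * v) - cmod w ^ 2 / 2)"
    by (simp add: kw_def norm_exp_eq_Re)
  also have "Re (cnj w * v) - cmod w ^ 2 / 2 = (cmod v ^ 2 - cmod (v - w) ^ 2) / 2"
    unfolding cmod_power2 by (simp add: power2_eq_square algebra_simps)
  finally show ?thesis .
qed

lemma berezin_integrand_eq:
  "cmod (kw w (\<psi> z)) powr p * cmod (u z) powr p * exp (- (p / 2) * cmod z ^ 2) / (1 + cmod z) powr p
   = exp (- (p / 2) * cmod (\<psi> z - w) ^ 2) * weighted_growth u \<psi> z powr p"
proof -
  have "exp ((cmod (\<psi> z) ^ 2 - cmod (\<psi> z - w) ^ 2) / 2) powr p * exp (- (p / 2) * cmod z ^ 2)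
      = exp (- (p / 2) * cmod (\<psi> z - w) ^ 2) * exp ((cmod (\<psi> z) ^ 2 - cmod z ^ 2) / 2) powr p"
    by (simp add: powr_def field_simps flip: exp_add)
  then show ?thesis
    by (simp add: norm_kw weighted_growth_def powr_mult powr_divide field_simps)
qed

lemma continuous_on_berezin_integrand:
  assumes cu: "continuous_on UNIV u" and cp: "continuous_on UNIV \<psi>" and "0 < p"
  shows "continuous_on UNIV (\<lambda>(w, z). cmod (kw w (\<psi> z)) powr p * cmod (u z) powr p
            * exp (- (p / 2) * cmod z ^ 2) / (1 + cmod z) powr p)"
proof -
  have "continuous_on UNIV (\<lambda>q::complex \<times> complex. u (snd q))"
    "continuous_on UNIV (\<lambda>q::complex \<times> complex. \<psi> (snd q))"
    by (auto intro!: continuous_on_compose2[OF cu] continuous_on_compose2[OF cp] continuous_intros)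
  then show ?thesis
    using \<open>0 < p\<close> unfolding case_prod_beta' kw_def
    by (intro continuous_intros continuous_on_powr') auto
qed

lemma borel_measurable_berezin_transform:
  assumes "continuous_on UNIV u" "continuous_on UNIV \<psi>" "0 < p"
  shows "berezin_transform p u \<psi> \<in> borel_measurable lebesgue"
  using borel_measurable_nn_integral_continuous[OF continuous_on_berezin_integrand[OF assms]]
  by (simp add: berezin_transform_def[abs_def])


lemma berezin_integrand_eq_shifted:
  fixes p :: real
  shows "cmod (kw w (\<psi> z)) powr p * cmod (u z) powr p * exp (- (p / 2) * cmod z ^ 2)
   = cmod (u z * exp (cnj w * \<psi> z - cnj c * z)) powr p * exp (p * (cmod c ^ 2 - cmod w ^ 2) / 2)
     * exp (- (p / 2) * cmod (z - c) ^ 2)"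
proof -
  have sq: "cmod (z - c) ^ 2 = cmod z ^ 2 - 2 * Re (cnj c * z) + cmod c ^ 2"
    unfolding cmod_power2 by (simp add: power2_eq_square algebra_simps)
  have "p * (Re (cnj w * \<psi> z) - cmod w ^ 2 / 2) + - (p / 2) * cmod z ^ 2
      = p * (Re (cnj w * \<psi> z) - Re (cnj c * z)) + p * (cmod c ^ 2 - cmod w ^ 2) / 2
        + - (p / 2) * cmod (z - c) ^ 2"
    unfolding sq by (simp add: field_simps)
  then have "exp (p * (Re (cnj w * \<psi> z) - cmod w ^ 2 / 2)) * exp (- (p / 2) * cmod z ^ 2)
      = exp (p * (Re (cnj w * \<psi> z) - Re (cnj c * z))) * exp (p * (cmod c ^ 2 - cmod w ^ 2) / 2)
        * exp (- (p / 2) * cmod (z - c) ^ 2)"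
    by (simp flip: exp_add)
  then show ?thesis
    by (simp add: kw_def norm_mult norm_exp_eq_Re powr_mult exp_powr_real mult_ac)
qed

lemma berezin_integrand_ge_on_disc:
  fixes p :: real
  assumes "0 < p" and "z \<in> ball c 1"
  shows "exp (p * (cmod c ^ 2 - cmod w ^ 2) / 2) * exp (- p / 2) * (2 + cmod c) powr (- p)
      * cmod (u z * exp (cnj w * \<psi> z - cnj c * z)) powr p
    \<le> cmod (kw w (\<psi> z)) powr p * cmod (u z) powr p * exp (- (p / 2) * cmod z ^ 2) / (1 + cmod z) powr p"
proof -
  have "cmod (z - c) < 1"
    using assms(2) by (simp add: dist_norm norm_minus_commute)
  then have "exp (- p / 2) \<le> exp (- (p / 2) * cmod (z - c) ^ 2)"
    using \<open>0 < p\<close> by (simp add: power_le_one mult_left_mono)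
  moreover have "(2 + cmod c) powr (- p) \<le> 1 / (1 + cmod z) powr p"
  proof -
    have "1 + cmod z \<le> 2 + cmod c"
      using \<open>cmod (z - c) < 1\<close> norm_triangle_ineq2[of z c] by simp
    moreover have "0 < 2 + cmod c"
      by (simp add: add_pos_nonneg)
    ultimately show ?thesis
      using \<open>0 < p\<close> by (simp add: powr_minus divide_simps powr_mono2)
  qed
  ultimately have "cmod (u z * exp (cnj w * \<psi> z - cnj c * z)) powr p * exp (p * (cmod c ^ 2 - cmod w ^ 2) / 2)
      * (exp (- p / 2) * (2 + cmod c) powr (- p))
    \<le> cmod (u z * exp (cnj w * \<psi> z - cnj c * z)) powr p * exp (p * (cmod c ^ 2 - cmod w ^ 2) / 2)
      * (exp (- (p / 2) * cmod (z - c) ^ 2) * (1 / (1 + cmod z) powr p))"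
    by (intro mult_left_mono mult_mono) auto
  also have "\<dots> = cmod (kw w (\<psi> z)) powr p * cmod (u z) powr p * exp (- (p / 2) * cmod z ^ 2)
      / (1 + cmod z) powr p"
    using berezin_integrand_eq_shifted[where u = u and c = c] by simp
  finally show ?thesis
    by (simp add: mult_ac)
qed

lemma berezin_transform_ge_disc_mean:
  fixes p :: real
  assumes holu: "u holomorphic_on UNIV" and holp: "\<psi> holomorphic_on UNIV" and "0 < p"
  shows "ennreal (exp (p * (cmod c ^ 2 - cmod w ^ 2) / 2) * exp (- p / 2) * (2 + cmod c) powr (- p)
      * (pi * cmod (u c * exp (cnj w * \<psi> c - cnj c * c)) powr p)) \<le> berezin_transform p u \<psi> w"
proof -
  define h where "h z = u z * exp (cnj w * \<psi> z - cnj c * z)" for z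
  define K where "K = exp (p * (cmod c ^ 2 - cmod w ^ 2) / 2) * exp (- p / 2) * (2 + cmod c) powr (- p)"
  have holh: "h holomorphic_on UNIV"
    unfolding h_def by (intro holomorphic_intros holu holp)
  have "0 \<le> K"
    by (simp add: K_def)
  have [measurable]: "(\<lambda>z. cmod (h z) powr p) \<in> borel_measurable borel"
    using \<open>0 < p\<close> holomorphic_on_imp_continuous_on[OF holh]
    by (intro borel_measurable_continuous_onI continuous_on_powr' continuous_intros) auto
  have [measurable]: "ball c 1 \<in> sets borel"
    by simp
  have "ennreal (K * (pi * cmod (h c) powr p))
      \<le> ennreal K * (\<integral>\<^sup>+z. indicator (ball c 1) z * ennreal (cmod (h z) powr p) \<partial>lborel)"
    using \<open>0 \<le> K\<close> norm_powr_le_disc_integral[OF holh \<open>0 < p\<close>, of 1 c]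
    by (simp add: ennreal_mult mult_left_mono)
  also have "\<dots> = (\<integral>\<^sup>+z. ennreal K * (indicator (ball c 1) z * ennreal (cmod (h z) powr p)) \<partial>lborel)"
    by (rule nn_integral_cmult[symmetric]) measurable
  also have "\<dots> \<le> (\<integral>\<^sup>+z. ennreal (cmod (kw w (\<psi> z)) powr p * cmod (u z) powr p
      * exp (- (p / 2) * cmod z ^ 2) / (1 + cmod z) powr p) \<partial>lborel)"
    using berezin_integrand_ge_on_disc[OF \<open>0 < p\<close>] \<open>0 \<le> K\<close>
    by (intro nn_integral_mono) (auto simp: K_def h_def indicator_def ennreal_mult[symmetric] ennreal_leI)
  also have "\<dots> = berezin_transform p u \<psi> w"
    by (simp add: berezin_transform_def nn_integral_completion)
  finally show ?thesis
    unfolding K_def h_def .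
qed

lemma norm_shifted_powr_at_centre:
  fixes p :: real
  shows "cmod (u c * exp (cnj w * \<psi> c - cnj c * c)) powr p * exp (p * (cmod c ^ 2 - cmod w ^ 2) / 2)
    = (1 + cmod c) powr p * weighted_growth u \<psi> c powr p * exp (- (p / 2) * cmod (\<psi> c - w) ^ 2)"
proof -
  have exponent: "Re (cnj w * \<psi> c) - Re (cnj c * c) + (cmod c ^ 2 - cmod w ^ 2) / 2
      = (cmod (\<psi> c) ^ 2 - cmod c ^ 2) / 2 - cmod (\<psi> c - w) ^ 2 / 2"
    unfolding cmod_power2 by (simp add: power2_eq_square field_simps)
  have "cmod (u c * exp (cnj w * \<psi> c - cnj c * c)) powr p * exp (p * (cmod c ^ 2 - cmod w ^ 2) / 2)
      = cmod (u c) powr p * exp (p * (Re (cnj w * \<psi> c) - Re (cnj c * c) + (cmod c ^ 2 - cmod w ^ 2) / 2))"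
    by (simp add: norm_mult norm_exp_eq_Re powr_mult exp_powr_real distrib_left mult.commute flip: exp_add)
  also have "\<dots> = (cmod (u c) * exp ((cmod (\<psi> c) ^ 2 - cmod c ^ 2) / 2)) powr p
      * exp (- (p / 2) * cmod (\<psi> c - w) ^ 2)"
    unfolding exponent by (simp add: powr_mult exp_powr_real right_diff_distrib mult.commute flip: exp_add)
  also have "cmod (u c) * exp ((cmod (\<psi> c) ^ 2 - cmod c ^ 2) / 2) = (1 + cmod c) * weighted_growth u \<psi> c"
    by (simp add: weighted_growth_def)
  finally show ?thesis
    by (simp add: powr_mult weighted_growth_nonneg)
qed

lemma berezin_transform_lower_bound:
  fixes p :: real
  assumes holu: "u holomorphic_on UNIV" and holp: "\<psi> holomorphic_on UNIV" and "0 < p"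
    and w: "cmod (w - \<psi> z) < 1"
  shows "ennreal (pi * exp (- p) * (1 / 2) powr p * weighted_growth u \<psi> z powr p)
    \<le> berezin_transform p u \<psi> w"
proof -
  define D where "D = cmod (\<psi> z - w) ^ 2"
  define L where "L = exp (p * (cmod z ^ 2 - cmod w ^ 2) / 2) * exp (- p / 2) * (2 + cmod z) powr (- p)
    * (pi * cmod (u z * exp (cnj w * \<psi> z - cnj z * z)) powr p)"
  have "L = pi * exp (- p / 2) * (2 + cmod z) powr (- p)
      * (cmod (u z * exp (cnj w * \<psi> z - cnj z * z)) powr p * exp (p * (cmod z ^ 2 - cmod w ^ 2) / 2))"
    by (simp add: L_def mult_ac)
  also have "\<dots> = pi * (exp (- p / 2) * exp (- (p / 2) * D))
      * (((2 + cmod z) powr (- p) * (1 + cmod z) powr p) * weighted_growth u \<psi> z powr p)"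
    unfolding norm_shifted_powr_at_centre D_def by (simp only: mult_ac)
  also have "(2 + cmod z) powr (- p) * (1 + cmod z) powr p = ((1 + cmod z) / (2 + cmod z)) powr p"
    by (simp add: powr_divide powr_minus_divide add_pos_nonneg)
  finally have L_eq: "L = pi * (exp (- p / 2) * exp (- (p / 2) * D))
      * (((1 + cmod z) / (2 + cmod z)) powr p * weighted_growth u \<psi> z powr p)" .
  have "D \<le> 1"
    using w by (simp add: D_def power_le_one norm_minus_commute)
  then have "p * D \<le> p"
    using \<open>0 < p\<close> by (metis mult.right_neutral mult_left_mono less_imp_le)
  then have "exp (- p) \<le> exp (- p / 2) * exp (- (p / 2) * D)"
    by (simp flip: exp_add)
  moreover have "(1 / 2) powr p \<le> ((1 + cmod z) / (2 + cmod z)) powr p"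
    using \<open>0 < p\<close> add_pos_nonneg[of 2 "cmod z"] by (intro powr_mono2) (auto simp: field_simps)
  ultimately have "pi * exp (- p) * ((1 / 2) powr p * weighted_growth u \<psi> z powr p) \<le> L"
    unfolding L_eq by (intro mult_mono mult_left_mono mult_right_mono) (auto simp: weighted_growth_nonneg)
  then have "ennreal (pi * exp (- p) * (1 / 2) powr p * weighted_growth u \<psi> z powr p) \<le> ennreal L"
    by (simp add: ennreal_leI mult.assoc)
  also have "\<dots> \<le> berezin_transform p u \<psi> w"
    unfolding L_def by (rule berezin_transform_ge_disc_mean[OF holu holp \<open>0 < p\<close>])
  finally show ?thesis .
qed


lemma nn_integral_le_gaussian_affine:
  fixes K s :: real and F :: "complex \<Rightarrow> real"
  assumes s: "0 < s" and a: "a \<noteq> 0" and psi: "\<And>z. \<psi> z = a * z + b"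
    and bnd: "\<And>z. F z \<le> K * exp (- s * cmod (\<psi> z - w) ^ 2)" and K: "0 \<le> K"
  shows "(\<integral>\<^sup>+z. ennreal (F z) \<partial>lebesgue) \<le> ennreal (K * (pi / (s * cmod a ^ 2)))"
proof -
  define c where "c = (w - b) / a"
  have eq: "cmod (\<psi> z - w) ^ 2 = cmod a ^ 2 * cmod (z - c) ^ 2" for z
  proof -
    have "\<psi> z - w = a * (z - c)" using a by (simp add: psi c_def field_simps)
    thus ?thesis by (simp add: norm_mult power_mult_distrib)
  qed
  have sa: "0 < s * cmod a ^ 2" using s a by simp
  have m: "(\<lambda>z::complex. ennreal (exp (- (s * cmod a ^ 2) * cmod (z - c) ^ 2))) \<in> borel_measurable lborel" by simp
  have "(\<integral>\<^sup>+z. ennreal (F z) \<partial>lebesgue) \<le> (\<integral>\<^sup>+z. ennreal (K * exp (- (s * cmod a ^ 2) * cmod (z - c) ^ 2)) \<partial>lebesgue)"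
    by (intro nn_integral_mono ennreal_leI) (use bnd eq in \<open>simp add: mult.assoc\<close>)
  also have "\<dots> = (\<integral>\<^sup>+z. ennreal K * ennreal (exp (- (s * cmod a ^ 2) * cmod (z - c) ^ 2)) \<partial>lborel)"
    using K by (simp add: nn_integral_completion ennreal_mult)
  also have "\<dots> = ennreal K * ennreal (pi / (s * cmod a ^ 2))"
    by (simp only: nn_integral_cmult[OF m] nn_integral_gaussian_complex[OF sa])
  also have "\<dots> = ennreal (K * (pi / (s * cmod a ^ 2)))"
    by (rule ennreal_mult[symmetric]) (use K sa in auto)
  finally show ?thesis .
qed

lemma Linf_real_continuous_iff:
  fixes f :: "complex \<Rightarrow> real"
  assumes "continuous_on UNIV f"
  shows "Linf_real f \<longleftrightarrow> (\<exists>C. \<forall>z. \<bar>f z\<bar> \<le> C)"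
proof
  assume "Linf_real f"
  then obtain C where "AE z in lebesgue. \<bar>f z\<bar> \<le> C"
    by (auto simp: Linf_real_def)
  then have "\<bar>f z\<bar> \<le> C" for z
    using assms by (intro continuous_AE_le_imp_le[of "\<lambda>z. \<bar>f z\<bar>"] continuous_intros)
  then show "\<exists>C. \<forall>z. \<bar>f z\<bar> \<le> C"
    by blast
next
  assume "\<exists>C. \<forall>z. \<bar>f z\<bar> \<le> C"
  moreover have [measurable]: "f \<in> borel_measurable borel"
    using assms by (rule borel_measurable_continuous_onI)
  then have "f \<in> borel_measurable lebesgue"
    by (intro measurable_completion) simp
  ultimately show "Linf_real f"
    by (auto simp: Linf_real_def intro: AE_I2)
qed

lemma le_powr_inverse_of_powr_le:
  fixes x y p :: real
  assumes "0 \<le> x" "0 < p" "x powr p \<le> y"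
  shows "x \<le> y powr (1 / p)"
  using powr_mono2[of "1 / p" "x powr p" y] assms by (simp add: powr_powr)

lemma affine_of_bounded_weighted_growth:
  assumes "u holomorphic_on UNIV" "u z1 \<noteq> 0" "\<psi> holomorphic_on UNIV"
    and bound: "\<And>z. weighted_growth u \<psi> z \<le> C"
  obtains a b where "\<And>z. \<psi> z = a * z + b" "cmod a \<le> 1"
proof (rule affine_of_weighted_growth[OF assms(1-3)])
  show "0 < max C 1"
    by simp
  show "cmod (u w) * exp ((cmod (\<psi> w) ^ 2 - cmod w ^ 2) / 2) \<le> max C 1 * (1 + cmod w)" for w
  proof -
    have "cmod (u w) * exp ((cmod (\<psi> w) ^ 2 - cmod w ^ 2) / 2) = weighted_growth u \<psi> w * (1 + cmod w)"
      by (simp add: weighted_growth_def)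
    also have "\<dots> \<le> max C 1 * (1 + cmod w)"
      using bound[of w] by (intro mult_right_mono) auto
    finally show ?thesis .
  qed
qed (rule that)


lemma berezin_transform_bounded:
  fixes p :: real
  assumes holu: "u holomorphic_on UNIV" and "u z1 \<noteq> 0" and holp: "\<psi> holomorphic_on UNIV"
    and ncp: "\<not> (\<exists>c. \<forall>z. \<psi> z = c)" and "0 < p" and C: "\<And>z. weighted_growth u \<psi> z \<le> C"
  obtains K where "\<And>w. berezin_transform p u \<psi> w \<le> ennreal K"
proof -
  obtain a b where ab: "\<And>z. \<psi> z = a * z + b"
    using affine_of_bounded_weighted_growth[OF holu \<open>u z1 \<noteq> 0\<close> holp C] by metis
  then have "a \<noteq> 0"
    using ncp by auto
  have "0 \<le> C"
    using C weighted_growth_nonneg order_trans by blast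
  have "berezin_transform p u \<psi> w \<le> ennreal (C powr p * (pi / (p / 2 * cmod a ^ 2)))" for w
    unfolding berezin_transform_def
  proof (rule nn_integral_le_gaussian_affine[OF _ \<open>a \<noteq> 0\<close> ab])
    fix z
    have "weighted_growth u \<psi> z powr p \<le> C powr p"
      using C \<open>0 < p\<close> by (intro powr_mono2) (auto simp: weighted_growth_nonneg)
    then show "cmod (kw w (\<psi> z)) powr p * cmod (u z) powr p * exp (- (p / 2) * cmod z ^ 2)
        / (1 + cmod z) powr p \<le> C powr p * exp (- (p / 2) * cmod (\<psi> z - w) ^ 2)"
      unfolding berezin_integrand_eq by (simp add: mult.commute mult_left_mono)
  qed (use \<open>0 < p\<close> in auto)
  then show ?thesis
    using that by blast
qed

lemma weighted_growth_le_of_berezin_transform_le: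
  fixes p :: real
  assumes holu: "u holomorphic_on UNIV" and holp: "\<psi> holomorphic_on UNIV" and "0 < p"
    and "cmod (w - \<psi> z) < 1" and "berezin_transform p u \<psi> w \<le> ennreal C"
  shows "weighted_growth u \<psi> z \<le> (max C 0 / (pi * exp (- p) * (1 / 2) powr p)) powr (1 / p)"
proof (rule le_powr_inverse_of_powr_le[OF weighted_growth_nonneg \<open>0 < p\<close>])
  define c where "c = pi * exp (- p) * (1 / 2) powr p"
  have "ennreal (c * weighted_growth u \<psi> z powr p) \<le> berezin_transform p u \<psi> w"
    unfolding c_def by (rule berezin_transform_lower_bound[OF holu holp \<open>0 < p\<close> assms(4)])
  also have "\<dots> \<le> ennreal C"
    by fact
  finally have "c * weighted_growth u \<psi> z powr p \<le> max C 0"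
    by (auto simp: ennreal_le_iff2)
  then show "weighted_growth u \<psi> z powr p \<le> max C 0 / c"
    by (simp add: c_def field_simps)
qed

lemma Linf_weighted_growth_iff_Linf_berezin_transform:
  fixes p :: real
  assumes holu: "u holomorphic_on UNIV" and "u z1 \<noteq> 0" and holp: "\<psi> holomorphic_on UNIV"
    and ncp: "\<not> (\<exists>c. \<forall>z. \<psi> z = c)" and "0 < p"
  shows "Linf_real (weighted_growth u \<psi>) \<longleftrightarrow> Linf_ennreal (berezin_transform p u \<psi>)"
proof
  have contu: "continuous_on UNIV u" and contp: "continuous_on UNIV \<psi>"
    using holu holp holomorphic_on_imp_continuous_on by blast+
  note Linf_iff = Linf_real_continuous_iff[OF continuous_on_weighted_growth[OF contu contp]]
  show "Linf_ennreal (berezin_transform p u \<psi>)" if bounded: "Linf_real (weighted_growth u \<psi>)"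
  proof -
    obtain C where "\<And>z. \<bar>weighted_growth u \<psi> z\<bar> \<le> C"
      using bounded unfolding Linf_iff by blast
    then have "\<And>z. weighted_growth u \<psi> z \<le> C"
      by (simp add: weighted_growth_nonneg)
    then obtain K where "\<And>w. berezin_transform p u \<psi> w \<le> ennreal K"
      by (rule berezin_transform_bounded[OF assms]) blast
    then show ?thesis
      using borel_measurable_berezin_transform[OF contu contp \<open>0 < p\<close>]
      by (auto simp: Linf_ennreal_def intro: AE_I2)
  qed
  assume "Linf_ennreal (berezin_transform p u \<psi>)"
  then obtain C where ae: "AE w in lebesgue. berezin_transform p u \<psi> w \<le> ennreal C"
    by (auto simp: Linf_ennreal_def)
  have "\<bar>weighted_growth u \<psi> z\<bar> \<le> (max C 0 / (pi * exp (- p) * (1 / 2) powr p)) powr (1 / p)" for z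
  proof -
    obtain w where "w \<in> ball (\<psi> z) 1" and "berezin_transform p u \<psi> w \<le> ennreal C"
      using AE_lebesgue_ex_in_open[OF ae, of "ball (\<psi> z) 1"] by auto
    then have "cmod (w - \<psi> z) < 1" "berezin_transform p u \<psi> w \<le> ennreal C"
      by (simp_all add: dist_norm norm_minus_commute)
    from weighted_growth_le_of_berezin_transform_le[OF holu holp \<open>0 < p\<close> this] show ?thesis
      by (simp add: weighted_growth_nonneg)
  qed
  then show "Linf_real (weighted_growth u \<psi>)"
    unfolding Linf_iff by blast
qed

lemma Bt_fun_eq_berezin_transform:
  assumes "continuous_on UNIV g" "continuous_on UNIV \<psi>" "0 < p"
  shows "Bt_fun p g \<psi> w = ennreal ((1 + cmod w) powr p) * berezin_transform p g \<psi> w"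
proof -
  let ?I = "\<lambda>z. cmod (kw w (\<psi> z)) powr p * cmod (g z) powr p * exp (- (p / 2) * cmod z ^ 2)
    / (1 + cmod z) powr p"
  have "continuous_on UNIV ?I"
    using continuous_on_compose2[OF continuous_on_berezin_integrand[OF assms], of UNIV "\<lambda>z. (w, z)"]
    by (simp add: continuous_on_Pair continuous_on_const continuous_on_id)
  then have "?I \<in> borel_measurable borel"
    by (rule borel_measurable_continuous_onI)
  from measurable_compose[OF this measurable_ennreal]
  have "(\<lambda>z. ennreal (?I z)) \<in> borel_measurable lborel"
    by (simp only: measurable_lborel2)
  then have "(\<lambda>z. ennreal (?I z)) \<in> borel_measurable lebesgue"
    by (rule measurable_completion)
  then show ?thesis
    unfolding Bt_fun_def berezin_transform_def
    by (simp add: nn_integral_cmult[symmetric] ennreal_mult[symmetric] mult_ac)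
qed

lemma one_plus_le_two_exp: "1 + (x::real) \<le> 2 * exp (x ^ 2 / 4)"
proof -
  have "1 + x \<le> 2 * (1 + x ^ 2 / 4)"
    using zero_le_power2[of "x - 1"] by (simp add: power2_eq_square field_simps)
  also have "\<dots> \<le> 2 * exp (x ^ 2 / 4)"
    by (intro mult_left_mono exp_ge_add_one_self) simp
  finally show ?thesis .
qed

lemma Mt_fun_nonneg: "0 \<le> Mt_fun g \<psi> z"
  by (simp add: Mt_fun_eq_weighted_growth weighted_growth_nonneg)

lemma weighted_growth_le_Mt_fun: "weighted_growth g \<psi> z \<le> Mt_fun g \<psi> z"
  using weighted_growth_nonneg[of g \<psi> z] by (simp add: Mt_fun_eq_weighted_growth mult_le_cancel_right1)

lemma Bt_integrand_le_gaussian: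
  fixes p :: real
  assumes "0 < p" and C: "\<And>z. Mt_fun g \<psi> z \<le> C"
  shows "cmod (kw w (\<psi> z)) powr p * (1 + cmod w) powr p * cmod (g z) powr p
      * exp (- (p / 2) * cmod z ^ 2) / (1 + cmod z) powr p
    \<le> (2 * C) powr p * exp (- (p / 4) * cmod (\<psi> z - w) ^ 2)"
proof -
  define D where "D = cmod (\<psi> z - w)"
  have "0 \<le> C"
    using C Mt_fun_nonneg order_trans by blast
  have "cmod w \<le> cmod (\<psi> z) + D" "0 \<le> cmod (\<psi> z) * D"
    using norm_triangle_ineq2[of w "\<psi> z"] by (simp_all add: D_def norm_minus_commute)
  moreover have "(1 + cmod (\<psi> z)) * (1 + D) = 1 + cmod (\<psi> z) + D + cmod (\<psi> z) * D"
    by (simp add: algebra_simps)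
  ultimately have "1 + cmod w \<le> (1 + cmod (\<psi> z)) * (1 + D)"
    by linarith
  then have "(1 + cmod w) * weighted_growth g \<psi> z \<le> (1 + cmod (\<psi> z)) * (1 + D) * weighted_growth g \<psi> z"
    by (rule mult_right_mono) (rule weighted_growth_nonneg)
  also have "\<dots> = (1 + D) * Mt_fun g \<psi> z"
    by (simp add: Mt_fun_eq_weighted_growth mult_ac)
  also have "\<dots> \<le> C * (2 * exp (D ^ 2 / 4))"
    using C[of z] one_plus_le_two_exp[of D] \<open>0 \<le> C\<close> Mt_fun_nonneg[of g \<psi> z]
    by (simp add: mult.commute mult_mono D_def)
  finally have "((1 + cmod w) * weighted_growth g \<psi> z) powr p \<le> (C * (2 * exp (D ^ 2 / 4))) powr p"
    using \<open>0 < p\<close> by (intro powr_mono2) (auto simp: weighted_growth_nonneg)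
  also have "\<dots> = (2 * C) powr p * exp (p * (D ^ 2 / 4))"
    using \<open>0 \<le> C\<close> by (simp add: powr_mult exp_powr_real mult_ac)
  finally have "exp (- (p / 2) * D ^ 2) * ((1 + cmod w) * weighted_growth g \<psi> z) powr p
      \<le> (2 * C) powr p * exp (- (p / 4) * D ^ 2)"
    by (auto simp: mult.left_commute[of "exp _"] mult_left_mono simp flip: exp_add
        intro: order_trans[OF mult_left_mono])
  moreover have "cmod (kw w (\<psi> z)) powr p * (1 + cmod w) powr p * cmod (g z) powr p
      * exp (- (p / 2) * cmod z ^ 2) / (1 + cmod z) powr p
      = (1 + cmod w) powr p * (cmod (kw w (\<psi> z)) powr p * cmod (g z) powr p
        * exp (- (p / 2) * cmod z ^ 2) / (1 + cmod z) powr p)"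
    by (simp add: mult_ac)
  ultimately show ?thesis
    unfolding berezin_integrand_eq by (simp add: D_def powr_mult weighted_growth_nonneg mult_ac)
qed

lemma Bt_fun_bounded:
  fixes p :: real
  assumes holg: "g holomorphic_on UNIV" and "g z1 \<noteq> 0" and holp: "\<psi> holomorphic_on UNIV"
    and ncp: "\<not> (\<exists>c. \<forall>z. \<psi> z = c)" and "0 < p" and C: "\<And>z. Mt_fun g \<psi> z \<le> C"
  obtains K where "\<And>w. Bt_fun p g \<psi> w \<le> ennreal K"
proof -
  have "weighted_growth g \<psi> z \<le> C" for z
    using weighted_growth_le_Mt_fun C order_trans by blast
  then obtain a b where ab: "\<And>z. \<psi> z = a * z + b"
    using affine_of_bounded_weighted_growth[OF holg \<open>g z1 \<noteq> 0\<close> holp] by metis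
  then have "a \<noteq> 0"
    using ncp by auto
  have "0 \<le> C"
    using C Mt_fun_nonneg order_trans by blast
  have "Bt_fun p g \<psi> w \<le> ennreal ((2 * C) powr p * (pi / (p / 4 * cmod a ^ 2)))" for w
    unfolding Bt_fun_def
    by (rule nn_integral_le_gaussian_affine[OF _ \<open>a \<noteq> 0\<close> ab Bt_integrand_le_gaussian[OF \<open>0 < p\<close> C]])
      (use \<open>0 < p\<close> \<open>0 \<le> C\<close> in auto)
  then show ?thesis
    using that by blast
qed

lemma Mt_fun_le_of_Bt_fun_le:
  fixes p :: real
  assumes holg: "g holomorphic_on UNIV" and holp: "\<psi> holomorphic_on UNIV" and "0 < p"
    and w: "cmod (w - \<psi> z) < 1" and "Bt_fun p g \<psi> w \<le> ennreal C"
  shows "Mt_fun g \<psi> z \<le> 2 * (max C 0 / (pi * exp (- p) * (1 / 2) powr p)) powr (1 / p)"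
proof -
  define c where "c = pi * exp (- p) * (1 / 2) powr p"
  have "ennreal ((1 + cmod w) powr p) * ennreal (c * weighted_growth g \<psi> z powr p) \<le> Bt_fun p g \<psi> w"
    unfolding Bt_fun_eq_berezin_transform[OF holomorphic_on_imp_continuous_on[OF holg]
        holomorphic_on_imp_continuous_on[OF holp] \<open>0 < p\<close>] c_def
    by (intro mult_left_mono berezin_transform_lower_bound[OF holg holp \<open>0 < p\<close> w]) simp
  also have "\<dots> \<le> ennreal C"
    by fact
  finally have "(1 + cmod w) powr p * (c * weighted_growth g \<psi> z powr p) \<le> max C 0"
    by (subst (asm) ennreal_mult'[symmetric]) (auto simp: ennreal_le_iff2)
  then have "((1 + cmod w) * weighted_growth g \<psi> z) powr p * c \<le> max C 0"
    by (simp add: powr_mult weighted_growth_nonneg mult_ac)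
  then have "((1 + cmod w) * weighted_growth g \<psi> z) powr p \<le> max C 0 / c"
    by (simp add: pos_le_divide_eq c_def)
  then have le_w: "(1 + cmod w) * weighted_growth g \<psi> z \<le> (max C 0 / c) powr (1 / p)"
    by (rule le_powr_inverse_of_powr_le[rotated 2]) (auto simp: weighted_growth_nonneg \<open>0 < p\<close>)
  have "cmod (\<psi> z) \<le> cmod w + 1"
    using w norm_triangle_ineq2[of "\<psi> z" w] by (simp add: norm_minus_commute)
  then have "1 + cmod (\<psi> z) \<le> 2 * (1 + cmod w)"
    using norm_ge_zero[of w] by argo
  then have "Mt_fun g \<psi> z \<le> 2 * (1 + cmod w) * weighted_growth g \<psi> z"
    unfolding Mt_fun_eq_weighted_growth by (rule mult_right_mono) (rule weighted_growth_nonneg)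
  with le_w show ?thesis
    unfolding c_def by (simp only: mult.assoc)
qed

lemma Linf_Mt_fun_iff_Linf_Bt_fun:
  fixes p :: real
  assumes holg: "g holomorphic_on UNIV" and "g z1 \<noteq> 0" and holp: "\<psi> holomorphic_on UNIV"
    and ncp: "\<not> (\<exists>c. \<forall>z. \<psi> z = c)" and "0 < p"
  shows "Linf_real (Mt_fun g \<psi>) \<longleftrightarrow> Linf_ennreal (Bt_fun p g \<psi>)"
proof
  have contg: "continuous_on UNIV g" and contp: "continuous_on UNIV \<psi>"
    using holg holp holomorphic_on_imp_continuous_on by blast+
  have "continuous_on UNIV (Mt_fun g \<psi>)"
    unfolding Mt_fun_eq_weighted_growth[abs_def]
    by (intro continuous_intros continuous_on_weighted_growth contg contp)
  note Linf_iff = Linf_real_continuous_iff[OF this]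
  show "Linf_ennreal (Bt_fun p g \<psi>)" if bounded: "Linf_real (Mt_fun g \<psi>)"
  proof -
    obtain C where "\<And>z. \<bar>Mt_fun g \<psi> z\<bar> \<le> C"
      using bounded unfolding Linf_iff by blast
    then have "\<And>z. Mt_fun g \<psi> z \<le> C"
      by (simp add: Mt_fun_nonneg)
    then obtain K where "\<And>w. Bt_fun p g \<psi> w \<le> ennreal K"
      by (rule Bt_fun_bounded[OF assms]) blast
    moreover have "Bt_fun p g \<psi> \<in> borel_measurable lebesgue"
      unfolding Bt_fun_eq_berezin_transform[OF contg contp \<open>0 < p\<close>, abs_def]
    proof (intro borel_measurable_times_ennreal)
      show "(\<lambda>w. ennreal ((1 + cmod w) powr p)) \<in> borel_measurable lebesgue"
        by (intro measurable_completion) (simp, measurable)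
    qed (rule borel_measurable_berezin_transform[OF contg contp \<open>0 < p\<close>])
    ultimately show ?thesis
      by (auto simp: Linf_ennreal_def intro: AE_I2)
  qed
  assume "Linf_ennreal (Bt_fun p g \<psi>)"
  then obtain C where ae: "AE w in lebesgue. Bt_fun p g \<psi> w \<le> ennreal C"
    by (auto simp: Linf_ennreal_def)
  have "\<bar>Mt_fun g \<psi> z\<bar> \<le> 2 * (max C 0 / (pi * exp (- p) * (1 / 2) powr p)) powr (1 / p)" for z
  proof -
    obtain w where "w \<in> ball (\<psi> z) 1" and "Bt_fun p g \<psi> w \<le> ennreal C"
      using AE_lebesgue_ex_in_open[OF ae, of "ball (\<psi> z) 1"] by auto
    then have "cmod (w - \<psi> z) < 1" "Bt_fun p g \<psi> w \<le> ennreal C"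
      by (simp_all add: dist_norm norm_minus_commute)
    from Mt_fun_le_of_Bt_fun_le[OF holg holp \<open>0 < p\<close> this] show ?thesis
      by (simp add: Mt_fun_nonneg)
  qed
  then show "Linf_real (Mt_fun g \<psi>)"
    unfolding Linf_iff by blast
qed

lemma entire_nonconstant_imp_deriv_nonzero:
  assumes "g holomorphic_on UNIV" "\<not> (\<exists>c. \<forall>z. g z = c)"
  obtains z where "deriv g z \<noteq> 0"
proof -
  have "\<exists>c. \<forall>z\<in>UNIV. g z = c" if "\<And>z. deriv g z = 0"
    using holomorphic_derivI[OF assms(1) open_UNIV UNIV_I] that
    by (intro has_field_derivative_zero_constant) auto
  with assms(2) that show ?thesis
    by blast
qed

theorem lemma1:
  fixes g \<psi> :: "complex \<Rightarrow> complex" and p :: real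
  assumes "g holomorphic_on UNIV" and "\<psi> holomorphic_on UNIV"
    and "\<not> (\<exists>c. \<forall>z. g z = c)" and "\<not> (\<exists>c. \<forall>z. \<psi> z = c)"
    and "0 < p"
  shows "(Linf_real (M_fun g \<psi>) \<longleftrightarrow> Linf_ennreal (B_fun p g \<psi>))
    \<and> (Linf_real (Mt_fun g \<psi>) \<longleftrightarrow> Linf_ennreal (Bt_fun p g \<psi>))"
proof
  obtain z1 where "deriv g z1 \<noteq> 0"
    using entire_nonconstant_imp_deriv_nonzero[OF assms(1,3)] .
  moreover have "deriv g holomorphic_on UNIV"
    using assms(1) by (rule holomorphic_deriv[OF _ open_UNIV])
  ultimately show "Linf_real (M_fun g \<psi>) \<longleftrightarrow> Linf_ennreal (B_fun p g \<psi>)"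
    unfolding M_fun_eq_weighted_growth B_fun_eq_berezin_transform
    using assms(2,4,5) by (intro Linf_weighted_growth_iff_Linf_berezin_transform)
  obtain z1 where "g z1 \<noteq> 0"
    using assms(3) by blast
  with assms(1,2,4,5) show "Linf_real (Mt_fun g \<psi>) \<longleftrightarrow> Linf_ennreal (Bt_fun p g \<psi>)"
    by (intro Linf_Mt_fun_iff_Linf_Bt_fun)
qed

end
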